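(* There is an algorithm which, given a permutation $\pi$ of $\{1,\dots,n\}$, outputs a maximum induced matching of the permutation graph $G(\pi)$ in $\mathcal{O}(n^2)$ time.
   Context: For a permutation $\pi=(\pi(1),\dots,\pi(n))$ of $\{1,\dots,n\}$, $\pi^{-1}(i)$ denotes the position of $i$ in $\pi$. The permutation graph $G(\pi)=(V,E)$ has $V=\{1,\dots,n\}$ and $uv\in E$ iff $(u-v)(\pi^{-1}(u)-\pi^{-1}(v))<0$. An induced matching of a graph $G=(V,E)$ is a set $M\subseteq E$ such that for any two distinct edges $u_1v_1,u_2v_2\in M$, none of $u_1u_2,u_1v_2,v_1u_2,v_1v_2$ is in $E$. A maximum induced matching is one of maximum cardinality. Running times are in the standard RAM model. *)

theory Defs
  imports "HOL-Combinatorics.Permutations"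
begin

text \<open>A permutation of {1..n} is a function pi :: nat => nat with pi permutes {1..n};
  pi i is the entry at position i and inv pi v is the position of v.
  Edges of a graph are doubleton sets {u,v}.\<close>

definition perm_graph_edges :: "nat \<Rightarrow> (nat \<Rightarrow> nat) \<Rightarrow> nat set set" where
  "perm_graph_edges n \<pi> =
     {{u, v} | u v. u \<in> {1..n} \<and> v \<in> {1..n} \<and>
        (int u - int v) * (int (inv \<pi> u) - int (inv \<pi> v)) < 0}"

definition induced_matching :: "nat set set \<Rightarrow> nat set set \<Rightarrow> bool" where
  "induced_matching E M \<longleftrightarrow> M \<subseteq> E \<and>
     (\<forall>u1 v1 u2 v2. {u1, v1} \<in> M \<and> {u2, v2} \<in> M \<and> {u1, v1} \<noteq> {u2, v2} \<longrightarrow>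
        {u1, u2} \<notin> E \<and> {u1, v2} \<notin> E \<and> {v1, u2} \<notin> E \<and> {v1, v2} \<notin> E)"

definition maximum_induced_matching :: "nat set set \<Rightarrow> nat set set \<Rightarrow> bool" where
  "maximum_induced_matching E M \<longleftrightarrow> induced_matching E M \<and>
     (\<forall>M'. induced_matching E M' \<longrightarrow> card M' \<le> card M)"

datatype instr =
    LoadC int int
  | Copy int int
  | Add int int int
  | Sub int int int
  | LoadI int int
  | StoreI int int
  | Jle int int nat
  | Halt

type_synonym config = "nat \<times> (int \<Rightarrow> int)"

definition halted :: "instr list \<Rightarrow> config \<Rightarrow> bool" where
  "halted P cf \<longleftrightarrow> fst cf \<ge> length P \<or> P ! fst cf = Halt"

fun exec :: "instr \<Rightarrow> config \<Rightarrow> config" where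
  "exec (LoadC a c) (pc, m) = (Suc pc, m(a := c))"
| "exec (Copy a b) (pc, m) = (Suc pc, m(a := m b))"
| "exec (Add a b c) (pc, m) = (Suc pc, m(a := m b + m c))"
| "exec (Sub a b c) (pc, m) = (Suc pc, m(a := m b - m c))"
| "exec (LoadI a b) (pc, m) = (Suc pc, m(a := m (m b)))"
| "exec (StoreI a b) (pc, m) = (Suc pc, m(m a := m b))"
| "exec (Jle a b t) (pc, m) = (if m a \<le> m b then t else Suc pc, m)"
| "exec Halt (pc, m) = (pc, m)"

definition step :: "instr list \<Rightarrow> config \<Rightarrow> config" where
  "step P cf = (if halted P cf then cf else exec (P ! fst cf) cf)"

definition run :: "instr list \<Rightarrow> nat \<Rightarrow> config \<Rightarrow> config" where
  "run P k cf = (step P ^^ k) cf"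

definition input_mem :: "nat \<Rightarrow> (nat \<Rightarrow> nat) \<Rightarrow> int \<Rightarrow> int" where
  "input_mem n \<pi> = (\<lambda>a. if a = 0 then int n
                         else if 1 \<le> a \<and> a \<le> int n then int (\<pi> (nat a)) else 0)"

definition output_edges :: "(int \<Rightarrow> int) \<Rightarrow> nat set set" where
  "output_edges m = {{nat (m (2 * j - 1)), nat (m (2 * j))} | j. 1 \<le> j \<and> j \<le> m 0}"

end

(* In a permutation graph, an edge {b, c} with c < b joins two values whose positions are
   inverted. For two edges of an induced matching the four endpoints form no further inversions,
   which forces one edge to lie entirely below (in value) and to the left (in position) of the
   other: the edges of an induced matching form a chain. Hence the largest induced matching
   within the values <= y at positions <= x either avoids value y, avoids position x, or
   contains the edge {y, pi x} together with a largest matching strictly below and to the left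
   of it. This recursion fills an (n+1) x (n+1) table in O(n^2) steps, and tracing back through
   the table yields a maximum induced matching. *)

theory Submission
  imports Defs
begin

section \<open>A recurrence for maximum induced matchings\<close>

text \<open>For a permutation \<open>p\<close> with inverse \<open>s\<close>, \<open>mim_box p s x y\<close> is the size of a maximum
  induced matching of the permutation graph among the values \<open>\<le> y\<close> at positions \<open>\<le> x\<close>:
  such a matching avoids position \<open>x\<close>, or avoids value \<open>y\<close>, or contains the edge
  \<open>{y, p x}\<close>, and then all its other edges lie below and to the left of that edge.\<close>
fun mim_box :: "(nat \<Rightarrow> nat) \<Rightarrow> (nat \<Rightarrow> nat) \<Rightarrow> nat \<Rightarrow> nat \<Rightarrow> nat" where
  "mim_box p s 0 y = 0"
| "mim_box p s (Suc x) 0 = 0"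
| "mim_box p s (Suc x) (Suc y) =
     max (max (mim_box p s x (Suc y)) (mim_box p s (Suc x) y))
       (if s (Suc y) < Suc x \<and> p (Suc x) < Suc y
        then Suc (mim_box p s (s (Suc y) - 1) (p (Suc x) - 1)) else 0)"

lemma mim_box_0_right [simp]: "mim_box p s x 0 = 0"
  by (cases x) auto

lemma mim_box_rec:
  "x \<noteq> 0 \<Longrightarrow> y \<noteq> 0 \<Longrightarrow> mim_box p s x y =
     max (max (mim_box p s (x - 1) y) (mim_box p s x (y - 1)))
       (if s y < x \<and> p x < y then Suc (mim_box p s (s y - 1) (p x - 1)) else 0)"
  by (cases x; cases y) auto

lemma mim_box_mono:
  assumes "x \<le> x'" "y \<le> y'"
  shows "mim_box p s x y \<le> mim_box p s x' y'"
proof -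
  have step_x: "mim_box p s x y \<le> mim_box p s (Suc x) y" for x y
    by (cases y) auto
  have step_y: "mim_box p s x y \<le> mim_box p s x (Suc y)" for x y
    by (cases x) auto
  have "mim_box p s x y \<le> mim_box p s x' y"
    using assms(1) by (induction rule: dec_induct) (auto intro: order_trans[OF _ step_x])
  also have "\<dots> \<le> mim_box p s x' y'"
    using assms(2) by (induction rule: dec_induct) (auto intro: order_trans[OF _ step_y])
  finally show ?thesis .
qed

lemma mim_box_pick_le:
  "s y < x \<Longrightarrow> p x < y \<Longrightarrow> Suc (mim_box p s (s y - 1) (p x - 1)) \<le> mim_box p s x y"
  by (simp add: mim_box_rec)

lemma mim_box_pick:
  assumes "x \<noteq> 0" "y \<noteq> 0" "\<not> mim_box p s x y \<le> mim_box p s (x - 1) y"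
    "\<not> mim_box p s x y \<le> mim_box p s x (y - 1)"
  shows "s y < x" "p x < y" "mim_box p s x y = Suc (mim_box p s (s y - 1) (p x - 1))"
  using assms mim_box_rec[of x y p s] by (auto simp: max_def split: if_splits)

lemma double_mim_box_le:
  assumes "\<And>v. 1 \<le> v \<Longrightarrow> 1 \<le> s v"
  shows "2 * mim_box p s x y \<le> x"
  using assms
proof (induction p s x y rule: mim_box.induct)
  case (3 p s x y)
  have "2 * Suc (mim_box p s (s (Suc y) - 1) (p (Suc x) - 1)) \<le> Suc x"
    if "s (Suc y) < Suc x" "p (Suc x) < Suc y"
  proof -
    have "2 * mim_box p s (s (Suc y) - 1) (p (Suc x) - 1) \<le> s (Suc y) - 1"
      using 3 that by blast
    moreover have "1 \<le> s (Suc y)" using 3(4) by simp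
    ultimately show ?thesis using that unfolding mult_Suc_right by linarith
  qed
  with 3 show ?case by (auto simp: max_def)
qed auto

function mim_trace :: "(nat \<Rightarrow> nat) \<Rightarrow> (nat \<Rightarrow> nat) \<Rightarrow> nat \<Rightarrow> nat \<Rightarrow> (nat \<times> nat) list" where
  "mim_trace p s x y =
     (if x = 0 \<or> y = 0 then []
      else if mim_box p s x y \<le> mim_box p s (x - 1) y then mim_trace p s (x - 1) y
      else if mim_box p s x y \<le> mim_box p s x (y - 1) then mim_trace p s x (y - 1)
      else if s y < x \<and> p x < y then (y, p x) # mim_trace p s (s y - 1) (p x - 1)
      else [])"
  by pat_completeness auto
termination by (relation "measure (\<lambda>(p, s, x, y). x + y)") auto

declare mim_trace.simps [simp del]

lemma mim_trace_step:
  assumes "x \<noteq> 0" "y \<noteq> 0"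
  obtains
    "mim_trace p s x y = mim_trace p s (x - 1) y" "mim_box p s x y = mim_box p s (x - 1) y"
  | "mim_trace p s x y = mim_trace p s x (y - 1)" "mim_box p s x y = mim_box p s x (y - 1)"
  | "s y < x" "p x < y" "mim_trace p s x y = (y, p x) # mim_trace p s (s y - 1) (p x - 1)"
    "mim_box p s x y = Suc (mim_box p s (s y - 1) (p x - 1))"
proof -
  have le: "mim_box p s (x - 1) y \<le> mim_box p s x y" "mim_box p s x (y - 1) \<le> mim_box p s x y"
    by (auto intro: mim_box_mono)
  consider "mim_box p s x y \<le> mim_box p s (x - 1) y"
    | "\<not> mim_box p s x y \<le> mim_box p s (x - 1) y" "mim_box p s x y \<le> mim_box p s x (y - 1)"
    | "\<not> mim_box p s x y \<le> mim_box p s (x - 1) y" "\<not> mim_box p s x y \<le> mim_box p s x (y - 1)"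
    by blast
  then show thesis
  proof cases
    case 1
    show thesis
    proof (rule that(1))
      show "mim_trace p s x y = mim_trace p s (x - 1) y"
        using 1 assms by (subst mim_trace.simps) simp
    qed (use 1 le in simp)
  next
    case 2
    show thesis
    proof (rule that(2))
      show "mim_trace p s x y = mim_trace p s x (y - 1)"
        using 2 assms by (subst mim_trace.simps) simp
    qed (use 2 le in simp)
  next
    case 3
    note pick = mim_box_pick[OF assms 3]
    show thesis
    proof (rule that(3))
      show "mim_trace p s x y = (y, p x) # mim_trace p s (s y - 1) (p x - 1)"
        using 3 assms pick by (subst mim_trace.simps) simp
    qed (use pick in simp_all)
  qed
qed

lemma length_mim_trace: "length (mim_trace p s x y) = mim_box p s x y"
proof (induction "x + y" arbitrary: x y rule: less_induct)
  case less
  show ?case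
  proof (cases "x = 0 \<or> y = 0")
    case True
    then show ?thesis by (auto simp: mim_trace.simps)
  next
    case False
    then have "x \<noteq> 0" "y \<noteq> 0" by auto
    then show ?thesis
    proof (cases rule: mim_trace_step[where p = p and s = s])
      case 1
      then show ?thesis using less[of "x - 1" y] \<open>x \<noteq> 0\<close> by simp
    next
      case 2
      then show ?thesis using less[of x "y - 1"] \<open>y \<noteq> 0\<close> by simp
    next
      case 3
      then show ?thesis using less[of "s y - 1" "p x - 1"] by simp
    qed
  qed
qed

lemma mim_trace_edge:
  "(b, c) \<in> set (mim_trace p s x y) \<Longrightarrow>
     \<exists>a. c = p a \<and> 1 \<le> a \<and> a \<le> x \<and> 1 \<le> b \<and> b \<le> y \<and> s b < a \<and> p a < b"
proof (induction "x + y" arbitrary: x y rule: less_induct)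
  case less
  show ?case
  proof (cases "x = 0 \<or> y = 0")
    case True
    then show ?thesis using less.prems by (auto simp: mim_trace.simps)
  next
    case False
    then have "x \<noteq> 0" "y \<noteq> 0" by auto
    then show ?thesis
    proof (cases rule: mim_trace_step[where p = p and s = s])
      case 1
      then obtain a where "c = p a" "1 \<le> a" "a \<le> x - 1" "1 \<le> b" "b \<le> y" "s b < a" "p a < b"
        using less(1)[of "x - 1" y] less.prems \<open>x \<noteq> 0\<close> by auto
      then show ?thesis by auto
    next
      case 2
      then obtain a where "c = p a" "1 \<le> a" "a \<le> x" "1 \<le> b" "b \<le> y - 1" "s b < a" "p a < b"
        using less(1)[of x "y - 1"] less.prems \<open>y \<noteq> 0\<close> by auto
      then show ?thesis by auto
    next
      case 3
      then have "(b, c) = (y, p x) \<or> (b, c) \<in> set (mim_trace p s (s y - 1) (p x - 1))"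
        using less.prems by simp
      then show ?thesis
      proof
        assume "(b, c) = (y, p x)"
        then show ?thesis using 3 \<open>x \<noteq> 0\<close> \<open>y \<noteq> 0\<close> by auto
      next
        assume "(b, c) \<in> set (mim_trace p s (s y - 1) (p x - 1))"
        moreover have "s y - 1 + (p x - 1) < x + y" using 3 by linarith
        ultimately obtain a where "c = p a" "1 \<le> a" "a \<le> s y - 1" "1 \<le> b" "b \<le> p x - 1" "s b < a" "p a < b"
          using less(1) by blast
        then show ?thesis using 3 by auto
      qed
    qed
  qed
qed

text \<open>The edge \<open>e\<^sub>2\<close> lies strictly below and to the left of the edge \<open>e\<^sub>1\<close>
  (pairs are (larger value, smaller value); \<open>s\<close> maps a value to its position).\<close>
definition dominates :: "(nat \<Rightarrow> nat) \<Rightarrow> nat \<times> nat \<Rightarrow> nat \<times> nat \<Rightarrow> bool" where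
  "dominates s e\<^sub>1 e\<^sub>2 \<longleftrightarrow> s (snd e\<^sub>2) < s (fst e\<^sub>1) \<and> fst e\<^sub>2 < snd e\<^sub>1"

lemma sorted_wrt_mim_trace:
  assumes "\<And>a. s (p a) = a"
  shows "sorted_wrt (dominates s) (mim_trace p s x y)"
proof (induction "x + y" arbitrary: x y rule: less_induct)
  case less
  show ?case
  proof (cases "x = 0 \<or> y = 0")
    case True
    then show ?thesis by (auto simp: mim_trace.simps)
  next
    case False
    then have "x \<noteq> 0" "y \<noteq> 0" by auto
    then show ?thesis
    proof (cases rule: mim_trace_step[where p = p and s = s])
      case 1
      then show ?thesis using less[of "x - 1" y] \<open>x \<noteq> 0\<close> by simp
    next
      case 2
      then show ?thesis using less[of x "y - 1"] \<open>y \<noteq> 0\<close> by simp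
    next
      case 3
      have "dominates s (y, p x) (b, c)" if mem: "(b, c) \<in> set (mim_trace p s (s y - 1) (p x - 1))" for b c
      proof -
        obtain a where "c = p a" "1 \<le> a" "a \<le> s y - 1" "1 \<le> b" "b \<le> p x - 1"
          using mim_trace_edge[OF mem] by blast
        then show ?thesis using assms 3 by (auto simp: dominates_def)
      qed
      then have "\<forall>e \<in> set (mim_trace p s (s y - 1) (p x - 1)). dominates s (y, p x) e" by auto
      moreover have "s y - 1 + (p x - 1) < x + y" using 3 by linarith
      then have "sorted_wrt (dominates s) (mim_trace p s (s y - 1) (p x - 1))" by (rule less)
      ultimately show ?thesis using 3 by simp
    qed
  qed
qed

section \<open>Induced matchings of permutation graphs\<close>

definition inverted :: "('a::linorder \<Rightarrow> 'b::linorder) \<Rightarrow> 'a \<Rightarrow> 'a \<Rightarrow> bool" where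
  "inverted s u v \<longleftrightarrow> u < v \<and> s v < s u \<or> v < u \<and> s u < s v"

text \<open>In graph terms: of two non-adjacent edges of a permutation graph, the one ending first lies
  entirely below and to the left of the other.\<close>
lemma nonadjacent_inversions_nested:
  fixes s :: "'a::linorder \<Rightarrow> 'b::linorder"
  assumes "inj s" "b < a" "s a < s b" "d < c" "s c < s d" "s d \<le> s b" "(c, d) \<noteq> (a, b)"
    and "\<not> inverted s a c" "\<not> inverted s a d" "\<not> inverted s b c" "\<not> inverted s b d"
  shows "c < b \<and> d < b \<and> s c < s a \<and> s d < s a"
proof -
  have inj: "s u = s v \<Longrightarrow> u = v" for u v
    using assms(1) by (rule injD)
  note ni = assms(8-11)[unfolded inverted_def de_Morgan_disj de_Morgan_conj not_less]
  have "d \<noteq> b"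
  proof
    assume "d = b"
    then show False using assms(2,3) ni(2) by auto
  qed
  then have "s d < s b"
    using assms(6) inj by (metis order_le_less)
  then have "d < b"
    using ni(4) \<open>d \<noteq> b\<close> by auto
  have "c \<noteq> b"
    using assms(5) \<open>s d < s b\<close> by auto
  then have "c < b"
    using assms(5) ni(3) \<open>s d < s b\<close> by auto
  have below_a: "s v < s a" if "v < a" "\<not> (v < a \<and> s a < s v)" for v
    using that inj[of v a] by (metis linorder_neqE order.asym)
  have "s d < s a" "s c < s a"
    using below_a assms(2) \<open>c < b\<close> \<open>d < b\<close> assms(9,8)
    unfolding inverted_def by (auto intro: order.strict_trans)
  show ?thesis
    using \<open>c < b\<close> \<open>d < b\<close> \<open>s c < s a\<close> \<open>s d < s a\<close> by blast
qed

lemma induced_matching_subset_edges: "induced_matching E M \<Longrightarrow> M \<subseteq> E"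
  by (simp add: induced_matching_def)

lemma induced_matchingD:
  assumes "induced_matching E M" "{u\<^sub>1, v\<^sub>1} \<in> M" "{u\<^sub>2, v\<^sub>2} \<in> M" "{u\<^sub>1, v\<^sub>1} \<noteq> {u\<^sub>2, v\<^sub>2}"
  shows "{u\<^sub>1, u\<^sub>2} \<notin> E" "{u\<^sub>1, v\<^sub>2} \<notin> E" "{v\<^sub>1, u\<^sub>2} \<notin> E" "{v\<^sub>1, v\<^sub>2} \<notin> E"
  using assms unfolding induced_matching_def by simp_all

lemma induced_matchingI:
  assumes "M \<subseteq> E"
    and "\<And>u\<^sub>1 v\<^sub>1 u\<^sub>2 v\<^sub>2. {u\<^sub>1, v\<^sub>1} \<in> M \<Longrightarrow> {u\<^sub>2, v\<^sub>2} \<in> M \<Longrightarrow> {u\<^sub>1, v\<^sub>1} \<noteq> {u\<^sub>2, v\<^sub>2} \<Longrightarrow>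
           {u\<^sub>1, u\<^sub>2} \<notin> E \<and> {u\<^sub>1, v\<^sub>2} \<notin> E \<and> {v\<^sub>1, u\<^sub>2} \<notin> E \<and> {v\<^sub>1, v\<^sub>2} \<notin> E"
  shows "induced_matching E M"
  using assms unfolding induced_matching_def by blast

lemma induced_matching_subset:
  assumes "induced_matching E M" "M' \<subseteq> M"
  shows "induced_matching E M'"
proof (rule induced_matchingI)
  show "M' \<subseteq> E"
    using assms(2) induced_matching_subset_edges[OF assms(1)] by (rule order_trans)
next
  fix u\<^sub>1 v\<^sub>1 u\<^sub>2 v\<^sub>2
  assume "{u\<^sub>1, v\<^sub>1} \<in> M'" "{u\<^sub>2, v\<^sub>2} \<in> M'" "{u\<^sub>1, v\<^sub>1} \<noteq> {u\<^sub>2, v\<^sub>2}"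
  with assms(2) have "{u\<^sub>1, v\<^sub>1} \<in> M" "{u\<^sub>2, v\<^sub>2} \<in> M" "{u\<^sub>1, v\<^sub>1} \<noteq> {u\<^sub>2, v\<^sub>2}"
    by auto
  from induced_matchingD[OF assms(1) this]
  show "{u\<^sub>1, u\<^sub>2} \<notin> E \<and> {u\<^sub>1, v\<^sub>2} \<notin> E \<and> {v\<^sub>1, u\<^sub>2} \<notin> E \<and> {v\<^sub>1, v\<^sub>2} \<notin> E"
    by blast
qed
lemma sorted_wrt_related:
  "sorted_wrt R xs \<Longrightarrow> x \<in> set xs \<Longrightarrow> y \<in> set xs \<Longrightarrow> x \<noteq> y \<Longrightarrow> R x y \<or> R y x"
  by (induction xs) auto

lemma sorted_wrt_irrefl_distinct:
  "sorted_wrt R xs \<Longrightarrow> (\<And>x. x \<in> set xs \<Longrightarrow> \<not> R x x) \<Longrightarrow> distinct xs"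
  by (induction xs) auto

locale perm_graph =
  fixes n :: nat and p :: "nat \<Rightarrow> nat"
  assumes permutes: "p permutes {1..n}"
begin

abbreviation s :: "nat \<Rightarrow> nat" where "s \<equiv> inv p"
abbreviation E :: "nat set set" where "E \<equiv> perm_graph_edges n p"

lemma s_p [simp]: "s (p x) = x"
  using permutes_inverses(2)[OF permutes] by simp

lemma p_s [simp]: "p (s x) = x"
  using permutes_inverses(1)[OF permutes] by simp

lemma p_in: "x \<in> {1..n} \<Longrightarrow> p x \<in> {1..n}"
  using permutes_in_image[OF permutes] by simp

lemma s_in: "x \<in> {1..n} \<Longrightarrow> s x \<in> {1..n}"
  using permutes_in_image[OF permutes_inv[OF permutes]] by simp

lemma p_ge_1: "1 \<le> x \<Longrightarrow> 1 \<le> p x"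
  using p_in permutes_not_in[OF permutes] by (cases "x \<in> {1..n}") auto

lemma s_ge_1: "1 \<le> x \<Longrightarrow> 1 \<le> s x"
  using s_in permutes_not_in[OF permutes_inv[OF permutes]] by (cases "x \<in> {1..n}") auto

lemma inj_s: "inj s"
  by (metis injI p_s)

lemma edge_iff: "{a, b} \<in> E \<longleftrightarrow> a \<in> {1..n} \<and> b \<in> {1..n} \<and> inverted s a b"
proof -
  have inv_iff: "(int u - int v) * (int (s u) - int (s v)) < 0 \<longleftrightarrow> inverted s u v" for u v
    unfolding inverted_def by (auto simp: mult_less_0_iff)
  show ?thesis
    unfolding perm_graph_edges_def inv_iff
    by (auto simp: doubleton_eq_iff inverted_def)
qed

lemma edgeE:
  assumes "e \<in> E"
  obtains a b where "e = {a, b}" "a \<in> {1..n}" "b \<in> {1..n}" "b < a" "s a < s b"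
proof -
  obtain u v where "e = {u, v}"
    using assms unfolding perm_graph_edges_def by blast
  with assms edge_iff[of u v] that show thesis
    by (auto simp: inverted_def insert_commute)
qed

lemma finite_edges: "finite E"
proof (rule finite_subset)
  show "E \<subseteq> Pow {1..n}" unfolding perm_graph_edges_def by auto
qed simp

lemma induced_matching_nested:
  assumes M: "induced_matching E M" and in_M: "{a, b} \<in> M" "{c, d} \<in> M" "{c, d} \<noteq> {a, b}"
    and ab: "b < a" "s a < s b" and cd: "d < c" "s c < s d" and "s d \<le> s b"
  shows "c < b \<and> d < b \<and> s c < s a \<and> s d < s a"
proof (rule nonadjacent_inversions_nested[OF inj_s ab cd \<open>s d \<le> s b\<close>])
  have "{a, b} \<in> E" "{c, d} \<in> E"
    using in_M(1,2) induced_matching_subset_edges[OF M] by blast+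
  then have "a \<in> {1..n}" "b \<in> {1..n}" "c \<in> {1..n}" "d \<in> {1..n}"
    by (simp_all add: edge_iff)
  with induced_matchingD[OF M in_M(1,2) not_sym[OF in_M(3)]]
  show "\<not> inverted s a c" "\<not> inverted s a d" "\<not> inverted s b c" "\<not> inverted s b d"
    by (simp_all add: edge_iff)
  show "(c, d) \<noteq> (a, b)"
  proof
    assume "(c, d) = (a, b)"
    with in_M(3) show False by simp
  qed
qed

text \<open>Take the edge of \<open>M\<close> reaching furthest to the right: all other edges are nested below it,
  matching the last alternative in the recursion of \<^const>\<open>mim_box\<close>.\<close>
lemma card_induced_matching_le_mim_box:
  assumes "induced_matching E M" "\<And>e v. e \<in> M \<Longrightarrow> v \<in> e \<Longrightarrow> v \<le> y \<and> s v \<le> x"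
  shows "card M \<le> mim_box p s x y"
  using assms
proof (induction "card M" arbitrary: M x y rule: less_induct)
  case less
  have "M \<subseteq> E" using less.prems(1) by (rule induced_matching_subset_edges)
  then have "finite M" using finite_edges finite_subset by blast
  show ?case
  proof (cases "M = {}")
    case True
    then show ?thesis by simp
  next
    case False
    define right where "right e = Max (s ` e)" for e :: "nat set"
    have "Max (right ` M) \<in> right ` M"
      using \<open>finite M\<close> False by (intro Max_in) auto
    then obtain e where "e \<in> M" "right e = Max (right ` M)"
      by (metis imageE)
    then have e_max: "right e' \<le> right e" if "e' \<in> M" for e'
      using that \<open>finite M\<close> by simp
    from \<open>e \<in> M\<close> \<open>M \<subseteq> E\<close> have "e \<in> E" by blast
    then obtain a b where e: "e = {a, b}" "b < a" "s a < s b"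
      by (rule edgeE)
    have below: "v \<le> b - 1 \<and> s v \<le> s a - 1" if "e' \<in> M - {e}" "v \<in> e'" for e' v
    proof -
      from that(1) \<open>M \<subseteq> E\<close> have "e' \<in> E" by blast
      then obtain c d where e': "e' = {c, d}" "d < c" "s c < s d"
        by (rule edgeE)
      have "s d \<le> s b"
        using e_max[of e'] that(1) e e' by (simp add: right_def)
      moreover have "{a, b} \<in> M" "{c, d} \<in> M" "{c, d} \<noteq> {a, b}"
        using \<open>e \<in> M\<close> that(1) e e' by auto
      ultimately have "c < b \<and> d < b \<and> s c < s a \<and> s d < s a"
        using induced_matching_nested[OF less.prems(1)] e(2,3) e'(2,3) by blast
      then show ?thesis using that(2) e' by auto
    qed
    have card_M: "card M = Suc (card (M - {e}))"
      using card_Suc_Diff1[OF \<open>finite M\<close> \<open>e \<in> M\<close>] by simp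
    have "card (M - {e}) \<le> mim_box p s (s a - 1) (b - 1)"
    proof (rule less.hyps)
      show "card (M - {e}) < card M" using card_M by simp
      show "induced_matching E (M - {e})"
        using less.prems(1) by (rule induced_matching_subset) blast
    qed (use below in blast)
    also have "Suc \<dots> \<le> mim_box p s (s b) a"
      using mim_box_pick_le[where p = p and s = s and x = "s b" and y = a] e by simp
    also have "\<dots> \<le> mim_box p s x y"
      using less.prems(2)[OF \<open>e \<in> M\<close>] e by (intro mim_box_mono) auto
    finally show ?thesis using card_M by simp
  qed
qed

lemma sorted_wrt_trace: "sorted_wrt (dominates s) (mim_trace p s x y)"
  by (rule sorted_wrt_mim_trace) simp

definition trace_matching :: "nat set set" where
  "trace_matching = (\<lambda>(b, c). {b, c}) ` set (mim_trace p s n n)"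

lemma trace_edge:
  assumes "(b, c) \<in> set (mim_trace p s n n)"
  shows "{b, c} \<in> E" "c < b" "s b < s c"
proof -
  obtain a where a: "c = p a" "1 \<le> a" "a \<le> n" "1 \<le> b" "b \<le> n" "s b < a" "p a < b"
    using mim_trace_edge[OF assms] by blast
  then show "c < b" "s b < s c" by simp_all
  moreover have "b \<in> {1..n}" "c \<in> {1..n}" using a p_in by auto
  ultimately show "{b, c} \<in> E" by (simp add: edge_iff inverted_def)
qed

lemma dominated_no_edge:
  assumes e\<^sub>1: "(b\<^sub>1, c\<^sub>1) \<in> set (mim_trace p s n n)" and e\<^sub>2: "(b\<^sub>2, c\<^sub>2) \<in> set (mim_trace p s n n)"
    and "dominates s (b\<^sub>1, c\<^sub>1) (b\<^sub>2, c\<^sub>2)" "u \<in> {b\<^sub>1, c\<^sub>1}" "v \<in> {b\<^sub>2, c\<^sub>2}"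
  shows "{u, v} \<notin> E"
proof -
  have "c\<^sub>1 \<le> u" "s b\<^sub>1 \<le> s u"
    using assms(4) trace_edge(2,3)[OF e\<^sub>1] by auto
  moreover have "v \<le> b\<^sub>2" "s v \<le> s c\<^sub>2"
    using assms(5) trace_edge(2,3)[OF e\<^sub>2] by auto
  moreover have "b\<^sub>2 < c\<^sub>1" "s c\<^sub>2 < s b\<^sub>1"
    using assms(3) by (simp_all add: dominates_def)
  ultimately have "v < u" "s v < s u" by linarith+
  then show ?thesis by (simp add: edge_iff inverted_def)
qed

lemma trace_matchingE:
  assumes "{u, v} \<in> trace_matching"
  obtains b c where "(b, c) \<in> set (mim_trace p s n n)" "{u, v} = {b, c}"
  using assms unfolding trace_matching_def by (auto elim!: imageE)

lemma induced_matching_trace: "induced_matching E trace_matching"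
proof (rule induced_matchingI)
  show "trace_matching \<subseteq> E"
    unfolding trace_matching_def using trace_edge(1) by auto
next
  fix u\<^sub>1 v\<^sub>1 u\<^sub>2 v\<^sub>2
  assume M: "{u\<^sub>1, v\<^sub>1} \<in> trace_matching" "{u\<^sub>2, v\<^sub>2} \<in> trace_matching" and ne: "{u\<^sub>1, v\<^sub>1} \<noteq> {u\<^sub>2, v\<^sub>2}"
  obtain b\<^sub>1 c\<^sub>1 where e\<^sub>1: "(b\<^sub>1, c\<^sub>1) \<in> set (mim_trace p s n n)" "{u\<^sub>1, v\<^sub>1} = {b\<^sub>1, c\<^sub>1}"
    using M(1) by (rule trace_matchingE)
  obtain b\<^sub>2 c\<^sub>2 where e\<^sub>2: "(b\<^sub>2, c\<^sub>2) \<in> set (mim_trace p s n n)" "{u\<^sub>2, v\<^sub>2} = {b\<^sub>2, c\<^sub>2}"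
    using M(2) by (rule trace_matchingE)
  have in\<^sub>1: "u\<^sub>1 \<in> {b\<^sub>1, c\<^sub>1}" "v\<^sub>1 \<in> {b\<^sub>1, c\<^sub>1}" unfolding e\<^sub>1(2)[symmetric] by simp_all
  have in\<^sub>2: "u\<^sub>2 \<in> {b\<^sub>2, c\<^sub>2}" "v\<^sub>2 \<in> {b\<^sub>2, c\<^sub>2}" unfolding e\<^sub>2(2)[symmetric] by simp_all
  have "(b\<^sub>1, c\<^sub>1) \<noteq> (b\<^sub>2, c\<^sub>2)" using ne e\<^sub>1(2) e\<^sub>2(2) by auto
  then have "dominates s (b\<^sub>1, c\<^sub>1) (b\<^sub>2, c\<^sub>2) \<or> dominates s (b\<^sub>2, c\<^sub>2) (b\<^sub>1, c\<^sub>1)"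
    using sorted_wrt_related[OF sorted_wrt_trace e\<^sub>1(1) e\<^sub>2(1)] by simp
  then show "{u\<^sub>1, u\<^sub>2} \<notin> E \<and> {u\<^sub>1, v\<^sub>2} \<notin> E \<and> {v\<^sub>1, u\<^sub>2} \<notin> E \<and> {v\<^sub>1, v\<^sub>2} \<notin> E"
  proof
    assume "dominates s (b\<^sub>1, c\<^sub>1) (b\<^sub>2, c\<^sub>2)"
    from dominated_no_edge[OF e\<^sub>1(1) e\<^sub>2(1) this] in\<^sub>1 in\<^sub>2 show ?thesis by blast
  next
    assume "dominates s (b\<^sub>2, c\<^sub>2) (b\<^sub>1, c\<^sub>1)"
    from dominated_no_edge[OF e\<^sub>2(1) e\<^sub>1(1) this] in\<^sub>1 in\<^sub>2
    have "{u\<^sub>2, u\<^sub>1} \<notin> E" "{v\<^sub>2, u\<^sub>1} \<notin> E" "{u\<^sub>2, v\<^sub>1} \<notin> E" "{v\<^sub>2, v\<^sub>1} \<notin> E"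
      by blast+
    then show ?thesis by (simp add: insert_commute)
  qed
qed

lemma card_trace_matching: "card trace_matching = mim_box p s n n"
proof -
  have "\<not> dominates s e e" if "e \<in> set (mim_trace p s n n)" for e
    using trace_edge(2)[of "fst e" "snd e"] that by (auto simp: dominates_def)
  then have "distinct (mim_trace p s n n)"
    by (rule sorted_wrt_irrefl_distinct[OF sorted_wrt_trace])
  moreover have "inj_on (\<lambda>(b, c). {b, c}) (set (mim_trace p s n n))"
  proof (rule inj_onI)
    fix e\<^sub>1 e\<^sub>2
    assume "e\<^sub>1 \<in> set (mim_trace p s n n)" "e\<^sub>2 \<in> set (mim_trace p s n n)"
      and eq: "(\<lambda>(b, c). {b, c}) e\<^sub>1 = (\<lambda>(b, c). {b, c}) e\<^sub>2"
    moreover obtain b\<^sub>1 c\<^sub>1 b\<^sub>2 c\<^sub>2 where e: "e\<^sub>1 = (b\<^sub>1, c\<^sub>1)" "e\<^sub>2 = (b\<^sub>2, c\<^sub>2)"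
      by (cases e\<^sub>1, cases e\<^sub>2)
    ultimately have "c\<^sub>1 < b\<^sub>1" "c\<^sub>2 < b\<^sub>2" "{b\<^sub>1, c\<^sub>1} = {b\<^sub>2, c\<^sub>2}"
      using trace_edge(2) by auto
    then show "e\<^sub>1 = e\<^sub>2"
      using e by (auto simp: doubleton_eq_iff)
  qed
  ultimately show ?thesis
    unfolding trace_matching_def by (simp add: card_image distinct_card length_mim_trace)
qed

lemma maximum_induced_matching_trace: "maximum_induced_matching E trace_matching"
  unfolding maximum_induced_matching_def
proof (intro conjI allI impI)
  show "induced_matching E trace_matching" by (rule induced_matching_trace)
  fix M
  assume M: "induced_matching E M"
  have "v \<le> n \<and> s v \<le> n" if "e \<in> M" "v \<in> e" for e v
  proof -
    from that(1) induced_matching_subset_edges[OF M] have "e \<in> E" by blast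
    then obtain a b where "e = {a, b}" "a \<in> {1..n}" "b \<in> {1..n}" by (rule edgeE)
    then show ?thesis using that(2) s_in by auto
  qed
  then have "card M \<le> mim_box p s n n"
    by (rule card_induced_matching_le_mim_box[OF M])
  then show "card M \<le> card trace_matching" by (simp add: card_trace_matching)
qed

end

lemma run_0 [simp]: "run P 0 cf = cf"
  by (simp add: run_def)

lemma run_Suc: "run P (Suc k) cf = run P k (step P cf)"
  by (simp only: run_def funpow_Suc_right comp_def)

lemma run_numeral: "run P (numeral k) cf = run P (pred_numeral k) (step P cf)"
  by (simp add: numeral_eq_Suc run_Suc)

lemma run_add: "run P (k + l) cf = run P l (run P k cf)"
  by (simp add: run_def add.commute[of k l] funpow_add)

lemma step_exec: "pc < length P \<Longrightarrow> P ! pc \<noteq> Halt \<Longrightarrow> step P (pc, m) = exec (P ! pc) (pc, m)"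
  by (simp add: step_def halted_def)

lemma run_loop:
  assumes it: "\<And>d m. I (Suc d) m \<Longrightarrow> (\<exists>k m'. k \<le> K \<and> run P k (h, m) = (h, m') \<and> I d m') \<or>
                                    (\<exists>k m'. k \<le> K0 \<and> run P k (h, m) = (e, m') \<and> Q m')"
    and ex: "\<And>m. I 0 m \<Longrightarrow> \<exists>k m'. k \<le> K0 \<and> run P k (h, m) = (e, m') \<and> Q m'"
  shows "I d m \<Longrightarrow> \<exists>k m'. k \<le> d * K + K0 \<and> run P k (h, m) = (e, m') \<and> Q m'"
proof (induction d arbitrary: m)
  case 0 then show ?case using ex by auto
next
  case (Suc d)
  from it[OF Suc.prems] show ?case
  proof
    assume "\<exists>k m'. k \<le> K \<and> run P k (h, m) = (h, m') \<and> I d m'"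
    then obtain k1 m1 where 1: "k1 \<le> K" "run P k1 (h, m) = (h, m1)" "I d m1" by blast
    from Suc.IH[OF 1(3)] obtain k2 m2 where 2: "k2 \<le> d * K + K0" "run P k2 (h, m1) = (e, m2)" "Q m2" by blast
    have "run P (k1 + k2) (h, m) = (e, m2)" using 1(2) 2(2) by (simp add: run_add)
    moreover have "k1 + k2 \<le> Suc d * K + K0" using 1(1) 2(1) by simp
    ultimately show ?thesis using 2(3) by blast
  next
    assume "\<exists>k m'. k \<le> K0 \<and> run P k (h, m) = (e, m') \<and> Q m'"
    then show ?thesis by (meson le_add2 order_trans)
  qed
qed

lemma run_trans: "run P k1 c = c1 \<Longrightarrow> run P k2 c1 = c2 \<Longrightarrow> run P (k1 + k2) c = c2"
  by (simp add: run_add)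

section \<open>The program\<close>

text \<open>Memory layout, with \<open>n = M[0]\<close>: the input occupies \<open>M[1..n]\<close>; the program copies it to
  \<open>M[n+1..2n]\<close>, stores its inverse in \<open>M[2n+1..3n]\<close>, the start address \<open>row_base n x\<close> of
  table row \<open>x\<close> in \<open>M[3n+1+x]\<close> (there is no multiplication), and the table entry
  \<open>mim_box p s x y\<close> in \<open>M[row_base n x + y]\<close>. The output edges overwrite \<open>M[1..2c]\<close>, which is
  harmless as \<open>2c \<le> n\<close>. Negative addresses are registers: \<open>-1\<close> and \<open>-13\<close> hold the constants
  1 and 0, \<open>-2\<close> and \<open>-3\<close> the indices \<open>x\<close> and \<open>y\<close>, \<open>-6\<close>, \<open>-10\<close>, \<open>-11\<close> hold
  \<open>n+1\<close>, \<open>2n\<close>, \<open>3n\<close>, \<open>-7\<close> the current row address and \<open>-9\<close> the number of output edges;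
  the others are scratch. Instructions 4--12 copy and invert the input, 22--57 fill the table row
  by row, and 61--90 trace back an optimal matching.\<close>

definition row_base :: "nat \<Rightarrow> nat \<Rightarrow> nat" where
  "row_base n x = 4 * n + 2 + x * (n + 1)"

lemma row_base_Suc: "row_base n (Suc x) = row_base n x + (n + 1)"
  unfolding row_base_def by simp

lemma row_base_ge: "row_base n x \<ge> 4 * n + 2"
  unfolding row_base_def by simp

lemma row_base_pred: "x \<ge> 1 \<Longrightarrow> int (row_base n x) = int (row_base n (x - 1)) + (int n + 1)"
  using row_base_Suc[of n "x - 1"] by simp

lemma row_base_inj:
  assumes "y \<le> n" "y' \<le> n" "row_base n x + y = row_base n x' + y'"
  shows "x = x' \<and> y = y'"
proof -
  have a: "x * (n+1) + y = x' * (n+1) + y'" using assms(3) unfolding row_base_def by simp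
  have "x = x'"
  proof (rule ccontr)
    assume "x \<noteq> x'"
    then have "x < x' \<or> x' < x" by arith
    then show False
    proof
      assume "x < x'"
      then have "(x+1) * (n+1) \<le> x' * (n+1)" by (intro mult_le_mono1) simp
      then show False using a assms(1) by simp
    next
      assume "x' < x"
      then have "(x'+1) * (n+1) \<le> x * (n+1)" by (intro mult_le_mono1) simp
      then show False using a assms(2) by simp
    qed
  qed
  then show ?thesis using a by simp
qed

definition prog :: "instr list" where
  "prog = [LoadC (-1) 1,
    LoadC (-13) 0,
    LoadC (-2) 1,
    Add (-10) 0 0,
    Jle (-2) 0 6,
    Jle (-1) (-1) 13,
    LoadI (-5) (-2),
    Add (-4) 0 (-2),
    StoreI (-4) (-5),
    Add (-4) (-10) (-5),
    StoreI (-4) (-2),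
    Add (-2) (-2) (-1),
    Jle (-1) (-1) 4,
    Add (-6) 0 (-1),
    Add (-11) (-10) 0,
    Add (-14) (-11) 0,
    Add (-14) (-14) (-1),
    Add (-14) (-14) (-1),
    Copy (-7) (-14),
    Add (-4) (-11) (-1),
    StoreI (-4) (-7),
    LoadC (-2) 1,
    Jle (-2) 0 24,
    Jle (-1) (-1) 58,
    Add (-7) (-7) (-6),
    Add (-4) (-11) (-1),
    Add (-4) (-4) (-2),
    StoreI (-4) (-7),
    LoadC (-3) 1,
    Jle (-3) 0 32,
    Add (-2) (-2) (-1),
    Jle (-1) (-1) 22,
    Sub (-4) (-7) (-6),
    Add (-4) (-4) (-3),
    LoadI (-5) (-4),
    Add (-4) (-7) (-3),
    Sub (-4) (-4) (-1),
    LoadI (-8) (-4),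
    Jle (-8) (-5) 40,
    Copy (-5) (-8),
    Add (-4) (-10) (-3),
    LoadI (-8) (-4),
    Jle (-2) (-8) 54,
    Add (-4) 0 (-2),
    LoadI (-12) (-4),
    Jle (-3) (-12) 54,
    Add (-4) (-11) (-8),
    LoadI (-4) (-4),
    Add (-4) (-4) (-12),
    Sub (-4) (-4) (-1),
    LoadI (-8) (-4),
    Add (-8) (-8) (-1),
    Jle (-8) (-5) 54,
    Copy (-5) (-8),
    Add (-4) (-7) (-3),
    StoreI (-4) (-5),
    Add (-3) (-3) (-1),
    Jle (-1) (-1) 29,
    Copy (-2) 0,
    Copy (-3) 0,
    LoadC (-9) 0,
    Jle (-2) (-13) 91,
    Jle (-3) (-13) 91,
    Add (-4) (-11) (-1),
    Add (-4) (-4) (-2),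
    LoadI (-7) (-4),
    Add (-4) (-7) (-3),
    LoadI (-5) (-4),
    Sub (-4) (-4) (-6),
    LoadI (-8) (-4),
    Jle (-5) (-8) 87,
    Add (-4) (-7) (-3),
    Sub (-4) (-4) (-1),
    LoadI (-8) (-4),
    Jle (-5) (-8) 89,
    Add (-12) 0 (-2),
    LoadI (-12) (-12),
    Add (-8) (-10) (-3),
    LoadI (-8) (-8),
    Add (-9) (-9) (-1),
    Add (-4) (-9) (-9),
    StoreI (-4) (-12),
    Sub (-4) (-4) (-1),
    StoreI (-4) (-3),
    Sub (-2) (-8) (-1),
    Sub (-3) (-12) (-1),
    Jle (-1) (-1) 61,
    Sub (-2) (-2) (-1),
    Jle (-1) (-1) 61,
    Sub (-3) (-3) (-1),
    Jle (-1) (-1) 61,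
    Copy 0 (-9),
    Halt]"

lemma length_prog: "length prog = 93"
  by (simp add: prog_def)

lemmas prog_nth = arg_cong[where f = "\<lambda>P. P ! k", OF prog_def] for k

lemmas prog_sim = run_Suc run_numeral step_exec length_prog prog_nth

lemma run_prog_init:
  assumes "m 0 = int n"
  shows "\<exists>m'. run prog 4 (0, m) = (4, m') \<and> m' 0 = int n \<and> m' (-1) = 1 \<and> m' (-13) = 0 \<and> m' (-2) = 1 \<and>
    m' (-10) = 2 * int n \<and> (\<forall>a. a \<notin> {-1,-13,-2,-10} \<longrightarrow> m' a = m a)"
  using assms by (simp add: prog_sim)

lemma run_prog_copy_test: "m (-2) = int i \<Longrightarrow> m 0 = int n \<Longrightarrow> i \<le> n \<Longrightarrow> run prog 1 (4, m) = (6, m)"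
  by (simp add: prog_sim)
lemma run_prog_copy_exit: "m (-2) = int i \<Longrightarrow> m 0 = int n \<Longrightarrow> \<not> i \<le> n \<Longrightarrow> run prog 2 (4, m) = (13, m)"
  by (simp add: prog_sim)

lemma run_prog_copy_body:
  assumes "m (-2) = int i" "m 0 = int n" "m (-1) = 1" "m (-10) = 2 * int n" "m (int i) = int P"
    "int n + int i \<noteq> 2 * int n + int P"
  shows "\<exists>m'. run prog 7 (6, m) = (4, m') \<and> m' (-2) = int i + 1 \<and> m' (int n + int i) = int P \<and>
    m' (2 * int n + int P) = int i \<and>
    (\<forall>a. a \<notin> {-2,-4,-5} \<longrightarrow> a \<noteq> int n + int i \<longrightarrow> a \<noteq> 2 * int n + int P \<longrightarrow> m' a = m a)"
  using assms by (simp add: prog_sim)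

lemma run_prog_table_init:
  assumes "m 0 = int n" "m (-1) = 1" "m (-10) = 2 * int n"
  shows "\<exists>m'. run prog 9 (13, m) = (22, m') \<and> m' (-6) = int n + 1 \<and> m' (-11) = 3 * int n \<and>
    m' (-7) = 4 * int n + 2 \<and> m' (3 * int n + 1) = 4 * int n + 2 \<and> m' (-2) = 1 \<and>
    (\<forall>a. a \<notin> {-4,-6,-11,-14,-7,-2} \<longrightarrow> a \<noteq> 3 * int n + 1 \<longrightarrow> m' a = m a)"
  using assms by (simp add: prog_sim)

lemma run_prog_row_test: "m (-2) = int x \<Longrightarrow> m 0 = int n \<Longrightarrow> x \<le> n \<Longrightarrow> run prog 1 (22, m) = (24, m)"
  by (simp add: prog_sim)
lemma run_prog_rows_exit: "m (-2) = int x \<Longrightarrow> m 0 = int n \<Longrightarrow> m (-1) = 1 \<Longrightarrow> \<not> x \<le> n \<Longrightarrow> run prog 2 (22, m) = (58, m)"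
  by (simp add: prog_sim)

lemma run_prog_row_init:
  assumes "m (-2) = int x" "m (-1) = 1" "m (-11) = 3 * int n" "m (-7) = int R" "m (-6) = int n + 1"
  shows "\<exists>m'. run prog 5 (24, m) = (29, m') \<and> m' (-7) = int R + (int n + 1) \<and>
    m' (3 * int n + 1 + int x) = int R + (int n + 1) \<and> m' (-3) = 1 \<and>
    (\<forall>a. a \<notin> {-7,-4,-3} \<longrightarrow> a \<noteq> 3 * int n + 1 + int x \<longrightarrow> m' a = m a)"
  using assms by (simp add: prog_sim)

lemma run_prog_cell_test: "m (-3) = int y \<Longrightarrow> m 0 = int n \<Longrightarrow> y \<le> n \<Longrightarrow> run prog 1 (29, m) = (32, m)"
  by (simp add: prog_sim)
lemma run_prog_cell_body:
  fixes R U Lf S Q R2 G :: nat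
  assumes r1: "m (-1) = 1" and rI: "m (-2) = int x" and rJ: "m (-3) = int y" and rW: "m (-6) = int n + 1"
   and rRB: "m (-7) = int R + (int n + 1)" and rN: "m 0 = int n" and rN2: "m (-10) = 2 * int n" and rN3: "m (-11) = 3 * int n"
   and u: "m (int R + int y) = int U"
   and l: "m (int R + (int n + 1) + int y - 1) = int Lf"
   and sg: "m (2 * int n + int y) = int S"
   and px: "m (int n + int x) = int Q"
   and rbs: "S < x \<Longrightarrow> Q < y \<Longrightarrow> m (3 * int n + int S) = int R2"
   and dg: "S < x \<Longrightarrow> Q < y \<Longrightarrow> m (int R2 + int Q - 1) = int G"
  shows "\<exists>k m'. k \<le> 26 \<and> run prog k (32, m) = (29, m') \<and> m' (-3) = int y + 1 \<and>
     m' (int R + (int n + 1) + int y) = int (max (max U Lf) (if S < x \<and> Q < y then Suc G else 0)) \<and>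
     (\<forall>a. a \<notin> {-3,-4,-5,-8,-12} \<longrightarrow> a \<noteq> int R + (int n + 1) + int y \<longrightarrow> m' a = m a)"
proof -
  consider (nb1) "x \<le> S" | (nb2) "\<not> x \<le> S" "y \<le> Q" | (b1) "\<not> x \<le> S" "\<not> y \<le> Q" "Suc G \<le> max U Lf"
    | (b2) "\<not> x \<le> S" "\<not> y \<le> Q" "\<not> Suc G \<le> max U Lf" by linarith
  then show ?thesis
  proof cases
    case nb1
    show ?thesis
    proof (cases "Lf \<le> U")
      case True show ?thesis by (rule exI[of _ 14]) (use assms True nb1 in \<open>simp add: prog_sim\<close>)
    next
      case False show ?thesis by (rule exI[of _ 15]) (use assms False nb1 in \<open>simp add: prog_sim\<close>)
    qed
  next
    case nb2
    show ?thesis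
    proof (cases "Lf \<le> U")
      case True show ?thesis by (rule exI[of _ 17]) (use assms True nb2 in \<open>simp add: prog_sim\<close>)
    next
      case False show ?thesis by (rule exI[of _ 18]) (use assms False nb2 in \<open>simp add: prog_sim\<close>)
    qed
  next
    case b1
    show ?thesis
    proof (cases "Lf \<le> U")
      case True show ?thesis by (rule exI[of _ 24]) (use assms True b1 in \<open>simp add: prog_sim max_def\<close>)
    next
      case False show ?thesis by (rule exI[of _ 25]) (use assms False b1 in \<open>simp add: prog_sim max_def\<close>)
    qed
  next
    case b2
    show ?thesis
    proof (cases "Lf \<le> U")
      case True show ?thesis by (rule exI[of _ 25]) (use assms True b2 in \<open>simp add: prog_sim max_def\<close>)
    next
      case False show ?thesis by (rule exI[of _ 26]) (use assms False b2 in \<open>simp add: prog_sim max_def\<close>)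
    qed
  qed
qed

lemma run_prog_cell_exit: "m (-3) = int y \<Longrightarrow> m 0 = int n \<Longrightarrow> m (-1) = 1 \<Longrightarrow> m (-2) = int x \<Longrightarrow> \<not> y \<le> n \<Longrightarrow>
  \<exists>m'. run prog 3 (29, m) = (22, m') \<and> m' (-2) = int x + 1 \<and> (\<forall>a. a \<noteq> -2 \<longrightarrow> m' a = m a)"
  by (simp add: prog_sim)

lemma run_prog_trace_init: "m 0 = int n \<Longrightarrow>
  \<exists>m'. run prog 3 (58, m) = (61, m') \<and> m' (-2) = int n \<and> m' (-3) = int n \<and> m' (-9) = 0 \<and>
    (\<forall>a. a \<notin> {-2,-3,-9} \<longrightarrow> m' a = m a)"
  by (simp add: prog_sim)

lemma run_prog_trace_exit_x: "m (-2) = int x \<Longrightarrow> m (-13) = 0 \<Longrightarrow> x = 0 \<Longrightarrow> run prog 1 (61, m) = (91, m)"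
  by (simp add: prog_sim)
lemma run_prog_trace_exit_y:
  "m (-2) = int x \<Longrightarrow> m (-3) = int y \<Longrightarrow> m (-13) = 0 \<Longrightarrow> x \<noteq> 0 \<Longrightarrow> y = 0 \<Longrightarrow>
    run prog 2 (61, m) = (91, m)"
  by (simp add: prog_sim)
lemma run_prog_trace_test:
  "m (-2) = int x \<Longrightarrow> m (-3) = int y \<Longrightarrow> m (-13) = 0 \<Longrightarrow> x \<noteq> 0 \<Longrightarrow> y \<noteq> 0 \<Longrightarrow>
    run prog 2 (61, m) = (63, m)"
  by (simp add: prog_sim)

lemma run_prog_output: "\<exists>m'. run prog 1 (91, m) = (92, m') \<and> m' 0 = m (-9) \<and> (\<forall>a. a \<noteq> 0 \<longrightarrow> m' a = m a)"
  by (simp add: prog_sim)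
lemma halted_prog_end: "halted prog (92, m)"
  by (simp add: halted_def prog_def)

lemma run_prog_trace_body:
  fixes R V U Lf S Q c :: nat
  assumes r1: "m (-1) = 1" and rI: "m (-2) = int x" and rJ: "m (-3) = int y" and rW: "m (-6) = int n + 1"
   and rN: "m 0 = int n" and rN2: "m (-10) = 2 * int n" and rN3: "m (-11) = 3 * int n" and rC: "m (-9) = int c"
   and rb: "m (3 * int n + 1 + int x) = int R + (int n + 1)"
   and v: "m (int R + (int n + 1) + int y) = int V"
   and u: "m (int R + int y) = int U"
   and l: "m (int R + (int n + 1) + int y - 1) = int Lf"
   and sg: "m (2 * int n + int y) = int S"
   and px: "m (int n + int x) = int Q"
  shows "(V \<le> U \<longrightarrow> (\<exists>m'. run prog 10 (63, m) = (61, m') \<and> m' (-2) = int x - 1 \<and>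
            (\<forall>a. a \<notin> {-2,-4,-5,-7,-8} \<longrightarrow> m' a = m a))) \<and>
         (\<not> V \<le> U \<longrightarrow> V \<le> Lf \<longrightarrow> (\<exists>m'. run prog 14 (63, m) = (61, m') \<and> m' (-3) = int y - 1 \<and>
            (\<forall>a. a \<notin> {-3,-4,-5,-7,-8} \<longrightarrow> m' a = m a))) \<and>
         (\<not> V \<le> U \<longrightarrow> \<not> V \<le> Lf \<longrightarrow> (\<exists>m'. run prog 24 (63, m) = (61, m') \<and> m' (-2) = int S - 1 \<and>
            m' (-3) = int Q - 1 \<and> m' (-9) = int c + 1 \<and> m' (2 * int c + 1) = int y \<and> m' (2 * int c + 2) = int Q \<and>
            (\<forall>a. a \<notin> {-2,-3,-4,-5,-7,-8,-9,-12} \<longrightarrow> a \<noteq> 2 * int c + 1 \<longrightarrow> a \<noteq> 2 * int c + 2 \<longrightarrow> m' a = m a)))"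
  using assms by (simp add: prog_sim)

section \<open>Correctness and running time of the program\<close>

context perm_graph
begin

abbreviation F where "F \<equiv> mim_box p s"
abbreviation T where "T \<equiv> mim_trace p s"

definition copy_inv :: "nat \<Rightarrow> (int \<Rightarrow> int) \<Rightarrow> bool" where
  "copy_inv i m \<longleftrightarrow> m 0 = int n \<and> m (-1) = 1 \<and> m (-13) = 0 \<and> m (-2) = int i \<and> m (-10) = 2 * int n \<and>
     (\<forall>j\<in>{1..n}. m (int j) = int (p j)) \<and>
     (\<forall>j. 1 \<le> j \<and> j < i \<longrightarrow> m (int n + int j) = int (p j)) \<and>
     (\<forall>j. 1 \<le> j \<and> j < i \<longrightarrow> m (2 * int n + int (p j)) = int j) \<and>
     (\<forall>a. a > 3 * int n \<longrightarrow> m a = 0)"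

lemma copy_start: "\<exists>m'. run prog 4 (0, input_mem n p) = (4, m') \<and> copy_inv 1 m'"
proof -
  have "input_mem n p 0 = int n" by (simp add: input_mem_def)
  from run_prog_init[where m = "input_mem n p" and n = n, OF this] obtain m' where m':
    "run prog 4 (0, input_mem n p) = (4, m')" "m' 0 = int n"
    "m' (-1) = 1" "m' (-13) = 0" "m' (-2) = 1" "m' (-10) = 2 * int n"
    "\<forall>a. a \<notin> {-1,-13,-2,-10} \<longrightarrow> m' a = input_mem n p a" by blast
  have "copy_inv 1 m'" unfolding copy_inv_def
  proof (intro conjI)
    show "\<forall>j\<in>{1..n}. m' (int j) = int (p j)"
    proof
      fix j :: nat assume "j \<in> {1..n}"
      then show "m' (int j) = int (p j)" using m'(7) by (auto simp: input_mem_def)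
    qed
    show "\<forall>a. a > 3 * int n \<longrightarrow> m' a = 0"
      using m'(7) by (auto simp: input_mem_def)
  qed (use m' in auto)
  then show ?thesis using m'(1) by blast
qed

lemma copy_step:
  assumes inv: "copy_inv i m" and i: "1 \<le> i" "i \<le> n"
  shows "\<exists>m'. run prog 8 (4, m) = (4, m') \<and> copy_inv (i+1) m'"
proof -
  have r: "m (-2) = int i" "m 0 = int n" "m (-1) = 1" "m (-10) = 2 * int n" "m (-13) = 0"
    using inv unfolding copy_inv_def by auto
  have mi: "m (int i) = int (p i)" using inv i unfolding copy_inv_def by auto
  have pi: "p i \<in> {1..n}" using p_in i by auto
  have ne: "int n + int i \<noteq> 2 * int n + int (p i)" using i pi by auto
  from run_prog_copy_body[OF r(1-4) mi ne] obtain m' where m': "run prog 7 (6, m) = (4, m')" "m' (-2) = int i + 1"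
    "m' (int n + int i) = int (p i)" "m' (2 * int n + int (p i)) = int i"
    "\<forall>a. a \<notin> {-2,-4,-5} \<longrightarrow> a \<noteq> int n + int i \<longrightarrow> a \<noteq> 2 * int n + int (p i) \<longrightarrow> m' a = m a" by blast
  have run: "run prog 8 (4, m) = (4, m')"
    using run_trans[OF run_prog_copy_test[OF r(1,2) i(2)] m'(1)] by simp
  have fr: "m' a = m a" if "a \<notin> {-2,-4,-5}" "a \<noteq> int n + int i" "a \<noteq> 2 * int n + int (p i)" for a
    using m'(5) that by blast
  have "copy_inv (i+1) m'" unfolding copy_inv_def
  proof (intro conjI)
    show "m' 0 = int n" "m' (-1) = 1" "m' (-13) = 0" "m' (-10) = 2 * int n"
      using fr r i by auto
    show "m' (-2) = int (i+1)" using m'(2) by simp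
    show "\<forall>j\<in>{1..n}. m' (int j) = int (p j)"
    proof
      fix j :: nat assume j: "j \<in> {1..n}"
      have "m' (int j) = m (int j)" using j i pi by (intro fr) auto
      then show "m' (int j) = int (p j)" using inv j unfolding copy_inv_def by auto
    qed
    show "\<forall>j. 1 \<le> j \<and> j < i + 1 \<longrightarrow> m' (int n + int j) = int (p j)"
    proof (intro allI impI)
      fix j assume j: "1 \<le> j \<and> j < i + 1"
      show "m' (int n + int j) = int (p j)"
      proof (cases "j = i")
        case True then show ?thesis using m'(3) by simp
      next
        case False
        have "m' (int n + int j) = m (int n + int j)" using j i pi False by (intro fr) auto
        then show ?thesis using inv j False unfolding copy_inv_def by auto
      qed
    qed
    show "\<forall>j. 1 \<le> j \<and> j < i + 1 \<longrightarrow> m' (2 * int n + int (p j)) = int j"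
    proof (intro allI impI)
      fix j assume j: "1 \<le> j \<and> j < i + 1"
      show "m' (2 * int n + int (p j)) = int j"
      proof (cases "j = i")
        case True then show ?thesis using m'(4) by simp
      next
        case False
        have "p j \<noteq> p i" using False by (metis s_p)
        moreover have "p j \<ge> 1" using p_ge_1 j by auto
        ultimately have "m' (2 * int n + int (p j)) = m (2 * int n + int (p j))"
          using j i pi False by (intro fr) auto
        then show ?thesis using inv j False unfolding copy_inv_def by auto
      qed
    qed
    show "\<forall>a. a > 3 * int n \<longrightarrow> m' a = 0"
    proof (intro allI impI)
      fix a assume a: "a > 3 * int n"
      have "m' a = m a" using a i pi by (intro fr) auto
      then show "m' a = 0" using inv a unfolding copy_inv_def by auto
    qed
  qed
  then show ?thesis using run by blast
qed

lemma copy_loop: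
  assumes "copy_inv 1 m"
  shows "\<exists>k m'. k \<le> n * 8 + 2 \<and> run prog k (4, m) = (13, m') \<and> copy_inv (n+1) m'"
proof -
  let ?I = "\<lambda>d m. copy_inv (n + 1 - d) m \<and> d \<le> n"
  have "?I n m \<Longrightarrow> \<exists>k m'. k \<le> n * 8 + 2 \<and> run prog k (4, m) = (13, m') \<and> copy_inv (n+1) m'"
  proof (rule run_loop[where I = ?I])
    fix d m assume h: "?I (Suc d) m"
    have iv: "copy_inv (n - d) m" and i: "1 \<le> n - d" "n - d \<le> n" using h by auto
    from copy_step[OF iv i] have "\<exists>m'. run prog 8 (4, m) = (4, m') \<and> copy_inv (n + 1 - d) m'"
      using h by (simp add: Suc_diff_le)
    then show "(\<exists>k m'. k \<le> 8 \<and> run prog k (4, m) = (4, m') \<and> ?I d m') \<or>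
        (\<exists>k m'. k \<le> 2 \<and> run prog k (4, m) = (13, m') \<and> copy_inv (n+1) m')"
      using h by auto
  next
    fix m assume h: "?I 0 m"
    then have "m (-2) = int (n+1)" "m 0 = int n" unfolding copy_inv_def by auto
    from run_prog_copy_exit[OF this] h
    show "\<exists>k m'. k \<le> 2 \<and> run prog k (4, m) = (13, m') \<and> copy_inv (n+1) m'" by auto
  qed
  then show ?thesis using assms by simp
qed

definition layout :: "(int \<Rightarrow> int) \<Rightarrow> bool" where
  "layout m \<longleftrightarrow> m 0 = int n \<and> m (-1) = 1 \<and> m (-13) = 0 \<and> m (-10) = 2 * int n \<and> m (-6) = int n + 1 \<and>
     m (-11) = 3 * int n \<and> (\<forall>i\<in>{1..n}. m (int n + int i) = int (p i)) \<and>
     (\<forall>v\<in>{1..n}. m (2 * int n + int v) = int (s v))"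

definition table_upto :: "nat \<Rightarrow> nat \<Rightarrow> (int \<Rightarrow> int) \<Rightarrow> bool" where
  "table_upto x y m \<longleftrightarrow> (\<forall>x'\<le>n. \<forall>y'\<le>n. (x' = 0 \<or> y' = 0 \<or> x' < x \<or> (x' = x \<and> y' < y)) \<longrightarrow>
      m (int (row_base n x') + int y') = int (F x' y'))"

definition row_pointers :: "nat \<Rightarrow> (int \<Rightarrow> int) \<Rightarrow> bool" where
  "row_pointers x m \<longleftrightarrow> (\<forall>x'\<le>x. m (3 * int n + 1 + int x') = int (row_base n x'))"

definition row_inv :: "nat \<Rightarrow> (int \<Rightarrow> int) \<Rightarrow> bool" where
  "row_inv x m \<longleftrightarrow> layout m \<and> row_pointers (x-1) m \<and> table_upto x 1 m \<and> m (-2) = int x \<and>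
     m (-7) = int (row_base n (x-1))"

definition cell_inv :: "nat \<Rightarrow> nat \<Rightarrow> (int \<Rightarrow> int) \<Rightarrow> bool" where
  "cell_inv x y m \<longleftrightarrow> layout m \<and> row_pointers x m \<and> table_upto x y m \<and> m (-2) = int x \<and> m (-3) = int y \<and>
     m (-7) = int (row_base n (x-1)) + (int n + 1)"

lemma layout_frame:
  assumes "layout m" "\<And>a. a \<le> 3 * int n \<Longrightarrow> a \<le> 0 \<or> a > int n \<Longrightarrow> a \<notin> {-2,-3,-4,-5,-7,-8,-9,-12,-14} \<Longrightarrow> m' a = m a"
  shows "layout m'"
proof -
  have b: "m' 0 = m 0" "m' (-1) = m (-1)" "m' (-13) = m (-13)" "m' (-10) = m (-10)"
    "m' (-6) = m (-6)" "m' (-11) = m (-11)"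
    by (auto intro!: assms(2))
  have c: "\<forall>i\<in>{1..n}. m' (int n + int i) = m (int n + int i)" by (auto intro!: assms(2))
  have d: "\<forall>v\<in>{1..n}. m' (2 * int n + int v) = m (2 * int n + int v)" by (auto intro!: assms(2))
  show ?thesis using assms(1) b c d unfolding layout_def by auto
qed

lemma table_start:
  assumes "copy_inv (n+1) m"
  shows "\<exists>m'. run prog 9 (13, m) = (22, m') \<and> row_inv 1 m'"
proof -
  have r: "m 0 = int n" "m (-1) = 1" "m (-10) = 2 * int n" using assms unfolding copy_inv_def by auto
  from run_prog_table_init[OF r] obtain m' where m':
    "run prog 9 (13, m) = (22, m')" "m' (-6) = int n + 1" "m' (-11) = 3 * int n"
    "m' (-7) = 4 * int n + 2" "m' (3 * int n + 1) = 4 * int n + 2" "m' (-2) = 1"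
    "\<forall>a. a \<notin> {-4,-6,-11,-14,-7,-2} \<longrightarrow> a \<noteq> 3 * int n + 1 \<longrightarrow> m' a = m a" by blast
  have fr: "m' a = m a" if "a \<notin> {-4,-6,-11,-14,-7,-2}" "a \<noteq> 3 * int n + 1" for a using m'(7) that by blast
  have "layout m'" unfolding layout_def
  proof (intro conjI)
    show "m' 0 = int n" "m' (-1) = 1" "m' (-13) = 0" "m' (-10) = 2 * int n"
      using fr assms unfolding copy_inv_def by auto
    show "m' (-6) = int n + 1" "m' (-11) = 3 * int n" using m' by auto
    show "\<forall>i\<in>{1..n}. m' (int n + int i) = int (p i)"
    proof
      fix i assume i: "i \<in> {1..n}"
      have "m' (int n + int i) = m (int n + int i)" using i by (intro fr) auto
      then show "m' (int n + int i) = int (p i)" using assms i unfolding copy_inv_def by auto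
    qed
    show "\<forall>v\<in>{1..n}. m' (2 * int n + int v) = int (s v)"
    proof
      fix v assume v: "v \<in> {1..n}"
      have "m' (2 * int n + int v) = m (2 * int n + int v)" using v by (intro fr) auto
      moreover have "s v \<in> {1..n}" using s_in v by auto
      ultimately show "m' (2 * int n + int v) = int (s v)" using assms unfolding copy_inv_def
        by (metis Suc_eq_plus1 atLeastAtMost_iff le_imp_less_Suc p_s)
    qed
  qed
  moreover have "row_pointers 0 m'" unfolding row_pointers_def row_base_def using m'(5) by simp
  moreover have "table_upto 1 1 m'" unfolding table_upto_def
  proof (intro allI impI)
    fix x' y' assume h: "x' \<le> n" "y' \<le> n" "x' = 0 \<or> y' = 0 \<or> x' < 1 \<or> x' = 1 \<and> y' < 1"
    then have z: "F x' y' = 0" by auto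
    have ge: "int (row_base n x') + int y' > 3 * int n + 1" using row_base_ge[of n x'] by linarith
    then have "m' (int (row_base n x') + int y') = m (int (row_base n x') + int y')" by (intro fr) auto
    also have "\<dots> = 0" using assms ge unfolding copy_inv_def by auto
    finally show "m' (int (row_base n x') + int y') = int (F x' y')" using z by simp
  qed
  moreover have "m' (-2) = int 1" "m' (-7) = int (row_base n (1-1))" using m' unfolding row_base_def by auto
  ultimately show ?thesis unfolding row_inv_def using m'(1) by auto
qed

lemma table_uptoD: "table_upto x y m \<Longrightarrow> x' \<le> n \<Longrightarrow> y' \<le> n \<Longrightarrow> (x' = 0 \<or> y' = 0 \<or> x' < x \<or> (x' = x \<and> y' < y)) \<Longrightarrow>
  m (int (row_base n x') + int y') = int (F x' y')"
  unfolding table_upto_def by blast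

lemma table_upto_frame:
  assumes "table_upto x y m" "\<And>a. 4 * int n + 2 \<le> a \<Longrightarrow> m' a = m a"
  shows "table_upto x y m'"
  unfolding table_upto_def
proof (intro allI impI)
  fix x' y' assume "x' \<le> n" "y' \<le> n" "x' = 0 \<or> y' = 0 \<or> x' < x \<or> x' = x \<and> y' < y"
  moreover have "m' (int (row_base n x') + int y') = m (int (row_base n x') + int y')"
    using row_base_ge[of n x'] by (intro assms(2)) linarith
  ultimately show "m' (int (row_base n x') + int y') = int (F x' y')"
    using assms(1) unfolding table_upto_def by auto
qed

lemma row_pointers_frame:
  assumes "row_pointers x m" "x \<le> n" "\<And>a. 3 * int n < a \<Longrightarrow> a \<le> 4 * int n + 1 \<Longrightarrow> m' a = m a"
  shows "row_pointers x m'"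
  unfolding row_pointers_def
proof (intro allI impI)
  fix x' assume "x' \<le> x"
  moreover have "m' (3 * int n + 1 + int x') = m (3 * int n + 1 + int x')"
    using \<open>x' \<le> x\<close> assms(2) by (intro assms(3)) auto
  ultimately show "m' (3 * int n + 1 + int x') = int (row_base n x')"
    using assms(1) unfolding row_pointers_def by auto
qed

lemma table_upto_mono:
  assumes "table_upto x' y' m" "x < x' \<or> x = x' \<and> y \<le> y'"
  shows "table_upto x y m"
  using assms unfolding table_upto_def by auto

lemma table_upto_next_row:
  assumes "table_upto x (n + 1) m"
  shows "table_upto (x + 1) 1 m"
  unfolding table_upto_def
proof (intro allI impI)
  fix x' y' assume "x' \<le> n" "y' \<le> n" "x' = 0 \<or> y' = 0 \<or> x' < x + 1 \<or> x' = x + 1 \<and> y' < 1"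
  then show "m (int (row_base n x') + int y') = int (F x' y')"
    by (intro table_uptoD[OF assms]) auto
qed

lemma row_pointers_mono: "row_pointers x' m \<Longrightarrow> x \<le> x' \<Longrightarrow> row_pointers x m"
  unfolding row_pointers_def by auto

text \<open>No other entry shares the address of entry \<open>(x, y)\<close> because rows have length \<open>n + 1\<close>.\<close>
lemma table_upto_Suc:
  assumes "table_upto x y m" "y \<le> n" "m' (int (row_base n x) + int y) = int (F x y)"
    and "\<And>a. 0 < a \<Longrightarrow> a \<noteq> int (row_base n x) + int y \<Longrightarrow> m' a = m a"
  shows "table_upto x (y + 1) m'"
  unfolding table_upto_def
proof (intro allI impI)
  fix x' y' assume h: "x' \<le> n" "y' \<le> n" "x' = 0 \<or> y' = 0 \<or> x' < x \<or> x' = x \<and> y' < y + 1"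
  show "m' (int (row_base n x') + int y') = int (F x' y')"
  proof (cases "x' = x \<and> y' = y")
    case True
    then show ?thesis using assms(3) by simp
  next
    case False
    have "row_base n x' + y' \<noteq> row_base n x + y"
      using row_base_inj[OF h(2) assms(2)] False by blast
    then have "m' (int (row_base n x') + int y') = m (int (row_base n x') + int y')"
      using row_base_ge[of n x'] by (intro assms(4)) linarith+
    moreover have "x' = 0 \<or> y' = 0 \<or> x' < x \<or> x' = x \<and> y' < y" using h(3) False by auto
    ultimately show ?thesis using table_uptoD[OF assms(1) h(1,2)] by simp
  qed
qed

lemma table_reads:
  assumes "layout m" "row_pointers x m" "table_upto x y m" "1 \<le> x" "x \<le> n" "1 \<le> y" "y \<le> n"
  shows "m (3 * int n + 1 + int x) = int (row_base n (x - 1)) + (int n + 1)"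
    and "m (int (row_base n (x - 1)) + int y) = int (F (x - 1) y)"
    and "m (int (row_base n (x - 1)) + (int n + 1) + int y - 1) = int (F x (y - 1))"
    and "m (2 * int n + int y) = int (s y)"
    and "m (int n + int x) = int (p x)"
    and "s y < x \<Longrightarrow> p x < y \<Longrightarrow> m (3 * int n + int (s y)) = int (row_base n (s y - 1))"
    and "s y < x \<Longrightarrow> p x < y \<Longrightarrow>
      m (int (row_base n (s y - 1)) + int (p x) - 1) = int (F (s y - 1) (p x - 1))"
proof -
  have row_x: "int (row_base n x) = int (row_base n (x - 1)) + (int n + 1)"
    using row_base_pred[OF assms(4)] by simp
  show "m (3 * int n + 1 + int x) = int (row_base n (x - 1)) + (int n + 1)"
    using assms(2) row_x unfolding row_pointers_def by auto
  show "m (int (row_base n (x - 1)) + int y) = int (F (x - 1) y)"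
    using table_uptoD[OF assms(3), of "x - 1" y] assms(4-7) by simp
  have "m (int (row_base n x) + int (y - 1)) = int (F x (y - 1))"
    using table_uptoD[OF assms(3), of x "y - 1"] assms(5-7) by simp
  then show "m (int (row_base n (x - 1)) + (int n + 1) + int y - 1) = int (F x (y - 1))"
    using row_x assms(6) by (simp add: of_nat_diff algebra_simps)
  show "m (2 * int n + int y) = int (s y)" "m (int n + int x) = int (p x)"
    using assms(1,4-7) unfolding layout_def by auto
  have sy: "s y \<in> {1..n}" and px: "p x \<in> {1..n}" using s_in p_in assms(4-7) by auto
  assume "s y < x" "p x < y"
  then show "m (3 * int n + int (s y)) = int (row_base n (s y - 1))"
    using assms(2) sy unfolding row_pointers_def
    by (metis (no_types, lifting) add.assoc atLeastAtMost_iff le_add_diff_inverse less_imp_diff_less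
        less_imp_le_nat of_nat_add of_nat_1)
  have "m (int (row_base n (s y - 1)) + int (p x - 1)) = int (F (s y - 1) (p x - 1))"
    by (rule table_uptoD[OF assms(3)]) (use \<open>s y < x\<close> sy px assms(5) in auto)
  then show "m (int (row_base n (s y - 1)) + int (p x) - 1) = int (F (s y - 1) (p x - 1))"
    using px by (simp add: of_nat_diff add_diff_eq)
qed

lemma cell_step:
  assumes inv: "cell_inv x y m" and x: "1 \<le> x" "x \<le> n" and y: "1 \<le> y" "y \<le> n"
  shows "\<exists>k m'. k \<le> 27 \<and> run prog k (29, m) = (29, m') \<and> cell_inv x (y+1) m'"
proof -
  define R where "R = row_base n (x - 1)"
  have B: "layout m" and RB: "row_pointers x m" and TB: "table_upto x y m" and rI: "m (-2) = int x"
    and rJ: "m (-3) = int y" and rRB: "m (-7) = int R + (int n + 1)"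
    using inv unfolding cell_inv_def R_def by auto
  have r: "m (-1) = 1" "m (-6) = int n + 1" "m 0 = int n" "m (-10) = 2 * int n" "m (-11) = 3 * int n"
    using B unfolding layout_def by auto
  note reads = table_reads[OF B RB TB x y, folded R_def]
  from run_prog_cell_body[OF r(1) rI rJ r(2) rRB r(3) r(4) r(5) reads(2-7)]
  obtain k m' where m': "k \<le> 26" "run prog k (32, m) = (29, m')" "m' (-3) = int y + 1"
    "m' (int R + (int n + 1) + int y) =
       int (max (max (F (x-1) y) (F x (y-1))) (if s y < x \<and> p x < y then Suc (F (s y - 1) (p x - 1)) else 0))"
    "\<forall>a. a \<notin> {-3,-4,-5,-8,-12} \<longrightarrow> a \<noteq> int R + (int n + 1) + int y \<longrightarrow> m' a = m a" by blast
  have row_x: "int (row_base n x) = int R + (int n + 1)"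
    unfolding R_def using row_base_pred[OF x(1)] by simp
  have new: "m' (int (row_base n x) + int y) = int (F x y)"
    using m'(4) row_x mim_box_rec[of x y p s] x y by simp
  have frame: "m' a = m a" if "a \<notin> {-3,-4,-5,-8,-12}" "a \<noteq> int (row_base n x) + int y" for a
    using m'(5) that row_x by auto
  have high: "4 * int n + 1 < int (row_base n x) + int y" using row_base_ge[of n x] by linarith
  have "layout m'" using B by (rule layout_frame) (use high in \<open>intro frame, auto\<close>)
  moreover have "row_pointers x m'" using RB x(2) by (rule row_pointers_frame) (use high in \<open>intro frame, auto\<close>)
  moreover have "table_upto x (y + 1) m'" using TB y(2) new by (rule table_upto_Suc) (auto intro: frame)
  moreover have "m' (-2) = int x" "m' (-7) = int R + (int n + 1)" using frame rI rRB high by auto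
  ultimately have "cell_inv x (y + 1) m'" unfolding cell_inv_def R_def using m'(3) by auto
  moreover have "run prog (1 + k) (29, m) = (29, m')"
    using run_trans[OF run_prog_cell_test[OF rJ r(3) y(2)] m'(2)] .
  ultimately show ?thesis using m'(1) by (intro exI[of _ "1 + k"] exI[of _ m']) auto
qed

lemma cell_loop:
  assumes inv: "cell_inv x 1 m" and x: "1 \<le> x" "x \<le> n"
  shows "\<exists>k m'. k \<le> n * 27 + 3 \<and> run prog k (29, m) = (22, m') \<and> row_inv (x+1) m'"
proof -
  let ?I = "\<lambda>d m. cell_inv x (n + 1 - d) m \<and> d \<le> n"
  have "?I n m \<Longrightarrow> \<exists>k m'. k \<le> n * 27 + 3 \<and> run prog k (29, m) = (22, m') \<and> row_inv (x+1) m'"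
  proof (rule run_loop[where I = ?I])
    fix d m assume h: "?I (Suc d) m"
    have iv: "cell_inv x (n - d) m" and y: "1 \<le> n - d" "n - d \<le> n" using h by auto
    from cell_step[OF iv x y] have "\<exists>k m'. k \<le> 27 \<and> run prog k (29, m) = (29, m') \<and> cell_inv x (n + 1 - d) m'"
      using h by (simp add: Suc_diff_le)
    then show "(\<exists>k m'. k \<le> 27 \<and> run prog k (29, m) = (29, m') \<and> ?I d m') \<or>
        (\<exists>k m'. k \<le> 3 \<and> run prog k (29, m) = (22, m') \<and> row_inv (x+1) m')"
      using h by auto
  next
    fix m assume h: "?I 0 m"
    then have iv: "cell_inv x (n+1) m" by simp
    then have B: "layout m" and RB: "row_pointers x m" and TB: "table_upto x (n+1) m"
      and rI: "m (-2) = int x" and rJ: "m (-3) = int (n+1)"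
      and rRB: "m (-7) = int (row_base n (x-1)) + (int n + 1)" unfolding cell_inv_def by auto
    have r: "m (-1) = 1" "m 0 = int n" using B unfolding layout_def by auto
    from run_prog_cell_exit[OF rJ r(2) r(1) rI] obtain m' where m':
      "run prog 3 (29, m) = (22, m')" "m' (-2) = int x + 1"
      "\<forall>a. a \<noteq> -2 \<longrightarrow> m' a = m a" by auto
    have fr: "m' a = m a" if "a \<noteq> -2" for a using m'(3) that by blast
    have "layout m'" using B by (rule layout_frame) (intro fr, auto)
    moreover have "row_pointers (x + 1 - 1) m'" using RB fr unfolding row_pointers_def by auto
    moreover have "table_upto (x + 1) 1 m'"
    proof (rule table_upto_frame)
      show "table_upto (x + 1) 1 m" using TB by (rule table_upto_next_row)
    qed (use fr in auto)
    moreover have "m' (-2) = int (x+1)" using m'(2) by simp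
    moreover have "m' (-7) = int (row_base n (x + 1 - 1))" using fr rRB row_base_pred[OF x(1)] by simp
    ultimately have "row_inv (x+1) m'" unfolding row_inv_def by auto
    then show "\<exists>k m'. k \<le> 3 \<and> run prog k (29, m) = (22, m') \<and> row_inv (x+1) m'" using m'(1) by auto
  qed
  then show ?thesis using inv by simp
qed

lemma row_step:
  assumes inv: "row_inv x m" and x: "1 \<le> x" "x \<le> n"
  shows "\<exists>k m'. k \<le> n * 27 + 9 \<and> run prog k (22, m) = (22, m') \<and> row_inv (x+1) m'"
proof -
  have B: "layout m" and RB: "row_pointers (x-1) m" and TB: "table_upto x 1 m" and rI: "m (-2) = int x"
    and rRB: "m (-7) = int (row_base n (x-1))" using inv unfolding row_inv_def by auto
  have r: "m (-1) = 1" "m (-6) = int n + 1" "m 0 = int n" "m (-11) = 3 * int n"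
    using B unfolding layout_def by auto
  from run_prog_row_init[OF rI r(1) r(4) rRB r(2)] obtain m' where m': "run prog 5 (24, m) = (29, m')"
    "m' (-7) = int (row_base n (x-1)) + (int n + 1)"
    "m' (3 * int n + 1 + int x) = int (row_base n (x-1)) + (int n + 1)"
    "m' (-3) = 1" "\<forall>a. a \<notin> {-7,-4,-3} \<longrightarrow> a \<noteq> 3 * int n + 1 + int x \<longrightarrow> m' a = m a" by blast
  have fr: "m' a = m a" if "a \<notin> {-7,-4,-3}" "a \<noteq> 3 * int n + 1 + int x" for a using m'(5) that by blast
  have run1: "run prog 6 (22, m) = (29, m')" using run_trans[OF run_prog_row_test[OF rI r(3) x(2)] m'(1)] by simp
  have "layout m'" using B by (rule layout_frame) (use x in \<open>intro fr, auto\<close>)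
  moreover have "row_pointers x m'" unfolding row_pointers_def
  proof (intro allI impI)
    fix x' assume h: "x' \<le> x"
    show "m' (3 * int n + 1 + int x') = int (row_base n x')"
    proof (cases "x' = x")
      case True then show ?thesis using m'(3) row_base_pred[OF x(1)] by simp
    next
      case False
      then have "m' (3 * int n + 1 + int x') = m (3 * int n + 1 + int x')" by (intro fr) auto
      then show ?thesis using RB h False unfolding row_pointers_def by auto
    qed
  qed
  moreover have "table_upto x 1 m'" using TB by (rule table_upto_frame) (use x in \<open>intro fr, auto\<close>)
  moreover have "m' (-2) = int x" using fr rI x by auto
  ultimately have "cell_inv x 1 m'" unfolding cell_inv_def using m'(2,4) by auto
  from cell_loop[OF this x] obtain k m2 where "k \<le> n * 27 + 3" "run prog k (29, m') = (22, m2)" "row_inv (x+1) m2"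
    by blast
  then show ?thesis using run_trans[OF run1] by (intro exI[of _ "6 + k"] exI[of _ m2]) auto
qed

lemma row_loop:
  assumes inv: "row_inv 1 m"
  shows "\<exists>k m'. k \<le> n * (n * 27 + 9) + 2 \<and> run prog k (22, m) = (58, m') \<and> row_inv (n+1) m'"
proof -
  let ?I = "\<lambda>d m. row_inv (n + 1 - d) m \<and> d \<le> n"
  have "?I n m \<Longrightarrow> \<exists>k m'. k \<le> n * (n * 27 + 9) + 2 \<and> run prog k (22, m) = (58, m') \<and> row_inv (n+1) m'"
  proof (rule run_loop[where I = ?I])
    fix d m assume h: "?I (Suc d) m"
    have iv: "row_inv (n - d) m" and x: "1 \<le> n - d" "n - d \<le> n" using h by auto
    from row_step[OF iv x] have "\<exists>k m'. k \<le> n * 27 + 9 \<and> run prog k (22, m) = (22, m') \<and> row_inv (n + 1 - d) m'"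
      using h by (simp add: Suc_diff_le)
    then show "(\<exists>k m'. k \<le> n * 27 + 9 \<and> run prog k (22, m) = (22, m') \<and> ?I d m') \<or>
        (\<exists>k m'. k \<le> 2 \<and> run prog k (22, m) = (58, m') \<and> row_inv (n+1) m')"
      using h by auto
  next
    fix m assume h: "?I 0 m"
    then have iv: "row_inv (n+1) m" by simp
    then have "m (-2) = int (n+1)" "m 0 = int n" "m (-1) = 1" unfolding row_inv_def layout_def by auto
    from run_prog_rows_exit[OF this] iv
    show "\<exists>k m'. k \<le> 2 \<and> run prog k (22, m) = (58, m') \<and> row_inv (n+1) m'" by auto
  qed
  then show ?thesis using inv by simp
qed

definition trace_inv :: "nat \<Rightarrow> nat \<Rightarrow> nat \<Rightarrow> (int \<Rightarrow> int) \<Rightarrow> bool" where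
  "trace_inv x y c m \<longleftrightarrow> layout m \<and> row_pointers n m \<and> table_upto (n+1) 1 m \<and>
     m (-2) = int x \<and> m (-3) = int y \<and> m (-9) = int c \<and>
     x \<le> n \<and> y \<le> n \<and> c \<le> length (T n n) \<and> drop c (T n n) = T x y \<and>
     (\<forall>j<c. m (2 * int j + 1) = int (fst (T n n ! j)) \<and> m (2 * int j + 2) = int (snd (T n n ! j)))"

definition output_mem :: "(int \<Rightarrow> int) \<Rightarrow> bool" where
  "output_mem m \<longleftrightarrow> m 0 = int (length (T n n)) \<and>
     (\<forall>j<length (T n n). m (2 * int j + 1) = int (fst (T n n ! j)) \<and> m (2 * int j + 2) = int (snd (T n n ! j)))"

lemma trace_start:
  assumes "row_inv (n+1) m"
  shows "\<exists>m'. run prog 3 (58, m) = (61, m') \<and> trace_inv n n 0 m'"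
proof -
  have B: "layout m" and RB: "row_pointers n m" and TB: "table_upto (n+1) 1 m"
    using assms unfolding row_inv_def by auto
  have "m 0 = int n" using B unfolding layout_def by auto
  from run_prog_trace_init[where m = m and n = n, OF this] obtain m' where m':
    "run prog 3 (58, m) = (61, m')" "m' (-2) = int n" "m' (-3) = int n" "m' (-9) = 0"
    "\<forall>a. a \<notin> {-2,-3,-9} \<longrightarrow> m' a = m a" by blast
  have fr: "m' a = m a" if "a \<notin> {-2,-3,-9}" for a using m'(5) that by blast
  have "layout m'" using B by (rule layout_frame) (intro fr, auto)
  moreover have "row_pointers n m'" using RB order.refl by (rule row_pointers_frame) (intro fr, auto)
  moreover have "table_upto (n+1) 1 m'" using TB by (rule table_upto_frame) (intro fr, auto)
  ultimately have "trace_inv n n 0 m'" unfolding trace_inv_def using m' by auto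
  then show ?thesis using m'(1) by blast
qed

lemma double_F_le: "2 * F x y \<le> x"
  by (rule double_mim_box_le) (rule s_ge_1)

text \<open>The output written so far occupies the cells \<open>1..2c\<close>, which lie below the copied input
  since \<open>2 c \<le> n\<close>.\<close>
lemma trace_inv_next:
  assumes inv: "trace_inv x y c m" and "c \<le> c'" "c' \<le> length (T n n)" "drop c' (T n n) = T x' y'"
    "x' \<le> n" "y' \<le> n" "m' (-2) = int x'" "m' (-3) = int y'" "m' (-9) = int c'"
    and new: "\<And>j. c \<le> j \<Longrightarrow> j < c' \<Longrightarrow>
      m' (2 * int j + 1) = int (fst (T n n ! j)) \<and> m' (2 * int j + 2) = int (snd (T n n ! j))"
    and frame: "\<And>a. a \<notin> {-2,-3,-4,-5,-7,-8,-9,-12} \<Longrightarrow> a \<notin> {2 * int c + 1 .. 2 * int c'} \<Longrightarrow> m' a = m a"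
  shows "trace_inv x' y' c' m'"
proof -
  have "layout m" "row_pointers n m" "table_upto (n + 1) 1 m"
    and old: "\<forall>j<c. m (2 * int j + 1) = int (fst (T n n ! j)) \<and> m (2 * int j + 2) = int (snd (T n n ! j))"
    using inv unfolding trace_inv_def by auto
  have "2 * c' \<le> n" using assms(3) double_F_le[of n n] length_mim_trace[of p s n n] by linarith
  then have outside: "m' a = m a" if "a \<notin> {-2,-3,-4,-5,-7,-8,-9,-12,-14}" "a \<le> 0 \<or> int n < a" for a
    using that by (intro frame) auto
  have "layout m'" using \<open>layout m\<close> by (rule layout_frame) (use outside in auto)
  moreover have "row_pointers n m'"
    using \<open>row_pointers n m\<close> order.refl by (rule row_pointers_frame) (use outside in auto)
  moreover have "table_upto (n + 1) 1 m'"
    using \<open>table_upto (n + 1) 1 m\<close> by (rule table_upto_frame) (use outside in auto)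
  moreover have "m' (2 * int j + 1) = int (fst (T n n ! j)) \<and> m' (2 * int j + 2) = int (snd (T n n ! j))"
    if "j < c'" for j
  proof (cases "j < c")
    case True
    then have "m' (2 * int j + 1) = m (2 * int j + 1)" "m' (2 * int j + 2) = m (2 * int j + 2)"
      by (auto intro!: frame)
    then show ?thesis using old True by simp
  qed (use new that in simp)
  ultimately show ?thesis using assms(3-9) unfolding trace_inv_def by auto
qed

lemma trace_step:
  assumes inv: "trace_inv x y c m" and x0: "x \<noteq> 0" and y0: "y \<noteq> 0"
  obtains k m' x' y' c' where "k \<le> 26" "run prog k (61, m) = (61, m')" "trace_inv x' y' c' m'" "x' + y' < x + y"
proof -
  define R where "R = row_base n (x - 1)"
  have B: "layout m" and RB: "row_pointers n m" and TB: "table_upto (n+1) 1 m" and rI: "m (-2) = int x"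
    and rJ: "m (-3) = int y" and rC: "m (-9) = int c" and x: "1 \<le> x" "x \<le> n" and y: "1 \<le> y" "y \<le> n"
    and cl: "c \<le> length (T n n)" and dr: "drop c (T n n) = T x y"
    using inv x0 y0 unfolding trace_inv_def by auto
  have r: "m (-1) = 1" "m (-6) = int n + 1" "m 0 = int n" "m (-10) = 2 * int n" "m (-11) = 3 * int n"
    "m (-13) = 0"
    using B unfolding layout_def by auto
  have "table_upto x y m" using x by (intro table_upto_mono[OF TB]) auto
  note reads = table_reads[OF B row_pointers_mono[OF RB x(2)] this x y, folded R_def]
  have v: "m (int R + (int n + 1) + int y) = int (F x y)"
    using table_uptoD[OF TB x(2) y(2)] row_base_pred[OF x(1)] x unfolding R_def by simp
  have sy: "s y \<in> {1..n}" and pxr: "p x \<in> {1..n}" using s_in p_in x y by auto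
  note BT = run_prog_trace_body[OF r(1) rI rJ r(2) r(3) r(4) r(5) rC reads(1) v reads(2-5)]
  have h4: "run prog 2 (61, m) = (63, m)" using run_prog_trace_test[OF rI rJ r(6) x0 y0] .
  consider (left) "F x y \<le> F (x-1) y" | (down) "\<not> F x y \<le> F (x-1) y" "F x y \<le> F x (y-1)"
    | (pick) "\<not> F x y \<le> F (x-1) y" "\<not> F x y \<le> F x (y-1)" by linarith
  then show thesis
  proof cases
    case left
    from BT left obtain m' where m': "run prog 10 (63, m) = (61, m')" "m' (-2) = int x - 1"
      "\<forall>a. a \<notin> {-2,-4,-5,-7,-8} \<longrightarrow> m' a = m a" by blast
    have next_inv: "trace_inv (x - 1) y c m'"
    proof (rule trace_inv_next[OF inv order.refl cl])
      show "drop c (T n n) = T (x - 1) y" using dr left x0 y0 by (simp add: mim_trace.simps[of p s x y])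
      show "x - 1 \<le> n" "y \<le> n" using x y by auto
      show "m' (-2) = int (x - 1)" using m'(2) x by simp
      show "m' (-3) = int y" "m' (-9) = int c"
        using m'(3) rJ rC by auto
      show "m' (2 * int j + 1) = int (fst (T n n ! j)) \<and> m' (2 * int j + 2) = int (snd (T n n ! j))"
        if "c \<le> j" "j < c" for j
        using that by simp
      show "m' a = m a" if "a \<notin> {-2,-3,-4,-5,-7,-8,-9,-12}" "a \<notin> {2 * int c + 1 .. 2 * int c}" for a
        using that m'(3) by auto
    qed
    have "run prog 12 (61, m) = (61, m')" using run_trans[OF h4 m'(1)] by simp
    with next_inv x0 show thesis by (intro that[of 12 m' "x - 1" y c]) simp_all
  next
    case down
    from BT down obtain m' where m': "run prog 14 (63, m) = (61, m')" "m' (-3) = int y - 1"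
      "\<forall>a. a \<notin> {-3,-4,-5,-7,-8} \<longrightarrow> m' a = m a" by blast
    have next_inv: "trace_inv x (y - 1) c m'"
    proof (rule trace_inv_next[OF inv order.refl cl])
      show "drop c (T n n) = T x (y - 1)" using dr down x0 y0 by (simp add: mim_trace.simps[of p s x y])
      show "x \<le> n" "y - 1 \<le> n" using x y by auto
      show "m' (-3) = int (y - 1)" using m'(2) y by simp
      show "m' (-2) = int x" "m' (-9) = int c"
        using m'(3) rI rC by auto
      show "m' (2 * int j + 1) = int (fst (T n n ! j)) \<and> m' (2 * int j + 2) = int (snd (T n n ! j))"
        if "c \<le> j" "j < c" for j
        using that by simp
      show "m' a = m a" if "a \<notin> {-2,-3,-4,-5,-7,-8,-9,-12}" "a \<notin> {2 * int c + 1 .. 2 * int c}" for a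
        using that m'(3) by auto
    qed
    have "run prog 16 (61, m) = (61, m')" using run_trans[OF h4 m'(1)] by simp
    with next_inv y0 show thesis by (intro that[of 16 m' x "y - 1" c]) simp_all
  next
    case pick
    from BT pick obtain m' where m': "run prog 24 (63, m) = (61, m')" "m' (-2) = int (s y) - 1"
      "m' (-3) = int (p x) - 1" "m' (-9) = int c + 1" "m' (2 * int c + 1) = int y" "m' (2 * int c + 2) = int (p x)"
      "\<forall>a. a \<notin> {-2,-3,-4,-5,-7,-8,-9,-12} \<longrightarrow> a \<noteq> 2 * int c + 1 \<longrightarrow> a \<noteq> 2 * int c + 2 \<longrightarrow> m' a = m a"
      by blast
    note chosen = mim_box_pick[OF x0 y0 pick]
    have T: "T x y = (y, p x) # T (s y - 1) (p x - 1)"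
      using pick chosen x0 y0 by (simp add: mim_trace.simps[of p s x y])
    have c_less: "c < length (T n n)" using dr T cl by (metis drop_all leI list.distinct(1))
    have nth: "T n n ! c = (y, p x)" and drop: "drop (Suc c) (T n n) = T (s y - 1) (p x - 1)"
      using Cons_nth_drop_Suc[OF c_less] dr T by auto
    have next_inv: "trace_inv (s y - 1) (p x - 1) (c + 1) m'"
    proof (rule trace_inv_next[OF inv])
      show "drop (c + 1) (T n n) = T (s y - 1) (p x - 1)" using drop by simp
      show "m' (-2) = int (s y - 1)" using m'(2) sy by simp
      show "m' (-3) = int (p x - 1)" using m'(3) pxr by simp
      show "m' (-9) = int (c + 1)" using m'(4) by simp
      show "m' (2 * int j + 1) = int (fst (T n n ! j)) \<and> m' (2 * int j + 2) = int (snd (T n n ! j))"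
        if "c \<le> j" "j < c + 1" for j
      proof -
        from that have "j = c" by simp
        then show ?thesis using m'(5,6) nth by simp
      qed
      show "m' a = m a" if "a \<notin> {-2,-3,-4,-5,-7,-8,-9,-12}" "a \<notin> {2 * int c + 1 .. 2 * int (c + 1)}" for a
      proof -
        from that(2) have "a \<noteq> 2 * int c + 1" "a \<noteq> 2 * int c + 2" by auto
        with that(1) m'(7) show ?thesis by blast
      qed
      show "c \<le> c + 1" by simp
      show "c + 1 \<le> length (T n n)" using c_less by simp
      show "s y - 1 \<le> n" "p x - 1 \<le> n" using sy pxr by auto
    qed
    have "run prog 26 (61, m) = (61, m')" using run_trans[OF h4 m'(1)] by simp
    moreover have "s y - 1 + (p x - 1) < x + y" using chosen by linarith
    ultimately show thesis using next_inv by (intro that[of 26 m' "s y - 1" "p x - 1" "c + 1"]) simp_all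
  qed
qed

lemma trace_done:
  assumes inv: "trace_inv x y c m" and xy: "x = 0 \<or> y = 0"
  shows "\<exists>k m'. k \<le> 3 \<and> run prog k (61, m) = (92, m') \<and> output_mem m'"
proof -
  have B: "layout m" and rI: "m (-2) = int x" and rJ: "m (-3) = int y" and rC: "m (-9) = int c"
    and cl: "c \<le> length (T n n)" and dr: "drop c (T n n) = T x y"
    and outs: "\<forall>j<c. m (2 * int j + 1) = int (fst (T n n ! j)) \<and> m (2 * int j + 2) = int (snd (T n n ! j))"
    using inv unfolding trace_inv_def by auto
  have r13: "m (-13) = 0" using B unfolding layout_def by auto
  have "T x y = []" using xy by (simp add: mim_trace.simps[of p s x y])
  then have cL: "c = length (T n n)" using dr cl by simp
  have h: "\<exists>k. k \<le> 2 \<and> run prog k (61, m) = (91, m)"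
  proof (cases "x = 0")
    case True then show ?thesis using run_prog_trace_exit_x[OF rI r13] by (intro exI[of _ 1]) auto
  next
    case False then show ?thesis using run_prog_trace_exit_y[OF rI rJ r13] xy by (intro exI[of _ 2]) auto
  qed
  then obtain k where k: "k \<le> 2" "run prog k (61, m) = (91, m)" by blast
  obtain m' where m': "run prog 1 (91, m) = (92, m')" "m' 0 = m (-9)" "\<forall>a. a \<noteq> 0 \<longrightarrow> m' a = m a"
    using run_prog_output by blast
  have "output_mem m'" unfolding output_mem_def
  proof (rule conjI)
    show "m' 0 = int (length (T n n))" using m'(2) rC cL by simp
  next
    show "\<forall>j<length (T n n).
      m' (2 * int j + 1) = int (fst (T n n ! j)) \<and> m' (2 * int j + 2) = int (snd (T n n ! j))"
    proof (intro allI impI)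
    fix j assume "j < length (T n n)"
    then show "m' (2 * int j + 1) = int (fst (T n n ! j)) \<and> m' (2 * int j + 2) = int (snd (T n n ! j))"
      using outs m'(3) cL by auto
    qed
  qed
  then show ?thesis using run_trans[OF k(2) m'(1)] k(1) by (intro exI[of _ "k+1"] exI[of _ m']) auto
qed

lemma trace_loop:
  assumes inv: "trace_inv n n 0 m"
  shows "\<exists>k m'. k \<le> (2*n) * 26 + 3 \<and> run prog k (61, m) = (92, m') \<and> output_mem m'"
proof -
  let ?I = "\<lambda>d m. \<exists>x y c. trace_inv x y c m \<and> x + y \<le> d"
  have "?I (2*n) m \<Longrightarrow> \<exists>k m'. k \<le> (2*n) * 26 + 3 \<and> run prog k (61, m) = (92, m') \<and> output_mem m'"
  proof (rule run_loop[where I = ?I])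
    fix d m assume "?I (Suc d) m"
    then obtain x y c where h: "trace_inv x y c m" "x + y \<le> Suc d" by blast
    show "(\<exists>k m'. k \<le> 26 \<and> run prog k (61, m) = (61, m') \<and> ?I d m') \<or>
        (\<exists>k m'. k \<le> 3 \<and> run prog k (61, m) = (92, m') \<and> output_mem m')"
    proof (cases "x = 0 \<or> y = 0")
      case True then show ?thesis using trace_done[OF h(1)] by blast
    next
      case False
      then have "x \<noteq> 0" "y \<noteq> 0" by auto
      then obtain k m' x' y' c' where kk: "k \<le> 26" "run prog k (61, m) = (61, m')"
        "trace_inv x' y' c' m'" "x' + y' < x + y"
        by (rule trace_step[OF h(1)])
      have "x' + y' \<le> d" using kk(4) h(2) by linarith
      then show ?thesis using kk by blast
    qed
  next
    fix m assume "?I 0 m"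
    then obtain x y c where h: "trace_inv x y c m" "x + y \<le> 0" by blast
    then show "\<exists>k m'. k \<le> 3 \<and> run prog k (61, m) = (92, m') \<and> output_mem m'" using trace_done[OF h(1)] by auto
  qed
  moreover have "?I (2*n) m" using inv by (intro exI[of _ n] exI[of _ n] exI[of _ 0]) simp
  ultimately show ?thesis by blast
qed

lemma prog_terminates:
  assumes "1 \<le> n"
  shows "\<exists>k m'. k \<le> 200 * n^2 \<and> run prog k (0, input_mem n p) = (92, m') \<and> output_mem m'"
proof -
  obtain m1 where m1: "run prog 4 (0, input_mem n p) = (4, m1)" "copy_inv 1 m1" using copy_start by blast
  obtain k2 m2 where m2: "k2 \<le> n * 8 + 2" "run prog k2 (4, m1) = (13, m2)" "copy_inv (n+1) m2"
    using copy_loop[OF m1(2)] by blast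
  obtain m3 where m3: "run prog 9 (13, m2) = (22, m3)" "row_inv 1 m3" using table_start[OF m2(3)] by blast
  obtain k4 m4 where m4: "k4 \<le> n * (n * 27 + 9) + 2" "run prog k4 (22, m3) = (58, m4)" "row_inv (n+1) m4"
    using row_loop[OF m3(2)] by blast
  obtain m5 where m5: "run prog 3 (58, m4) = (61, m5)" "trace_inv n n 0 m5" using trace_start[OF m4(3)] by blast
  obtain k6 m6 where m6: "k6 \<le> (2*n) * 26 + 3" "run prog k6 (61, m5) = (92, m6)" "output_mem m6"
    using trace_loop[OF m5(2)] by blast
  have run: "run prog (4 + k2 + 9 + k4 + 3 + k6) (0, input_mem n p) = (92, m6)"
    using run_trans[OF run_trans[OF run_trans[OF run_trans[OF run_trans[OF m1(1) m2(2)] m3(1)] m4(2)]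
      m5(1)] m6(2)] .
  have "4 + k2 + 9 + k4 + 3 + k6 \<le> 4 + (n*8+2) + 9 + (n * (n * 27 + 9) + 2) + 3 + ((2*n) * 26 + 3)"
    using m2(1) m4(1) m6(1) by linarith
  also have "\<dots> \<le> 200 * n^2"
  proof -
    obtain q where q: "n = Suc q" using assms by (cases n) auto
    show ?thesis unfolding q by (simp add: algebra_simps power2_eq_square)
  qed
  finally show ?thesis using run m6(3) by blast
qed

lemma output_edges_trace: "output_mem m \<Longrightarrow> output_edges m = trace_matching"
proof -
  assume f: "output_mem m"
  have m0: "m 0 = int (length (T n n))" and outs: "\<forall>j<length (T n n).
      m (2 * int j + 1) = int (fst (T n n ! j)) \<and> m (2 * int j + 2) = int (snd (T n n ! j))"
    using f unfolding output_mem_def by auto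
  show ?thesis
  proof
    show "output_edges m \<subseteq> trace_matching"
    proof
      fix e assume "e \<in> output_edges m"
      then obtain j where j: "e = {nat (m (2 * j - 1)), nat (m (2 * j))}" "1 \<le> j" "j \<le> m 0"
        unfolding output_edges_def by blast
      define i where "i = nat (j - 1)"
      have i: "i < length (T n n)" "j = int i + 1" using j m0 unfolding i_def by auto
      have e1: "2 * j - 1 = 2 * int i + 1" "2 * j = 2 * int i + 2" using i by auto
      have o: "m (2 * int i + 1) = int (fst (T n n ! i))" "m (2 * int i + 2) = int (snd (T n n ! i))"
        using outs i by auto
      have a1: "m (2 * j - 1) = int (fst (T n n ! i))" using o(1) e1(1) by metis
      have a2: "m (2 * j) = int (snd (T n n ! i))" using o(2) e1(2) by metis
      have "nat (m (2 * j - 1)) = fst (T n n ! i)" "nat (m (2 * j)) = snd (T n n ! i)"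
        using a1 a2 by simp_all
      then have "e = {fst (T n n ! i), snd (T n n ! i)}" using j(1) by simp
      moreover have "T n n ! i \<in> set (T n n)" using i by simp
      ultimately show "e \<in> trace_matching" unfolding trace_matching_def by (force simp: case_prod_beta)
    qed
  next
    show "trace_matching \<subseteq> output_edges m"
    proof
      fix e assume "e \<in> trace_matching"
      then obtain a b where ab: "(a,b) \<in> set (T n n)" "e = {a,b}" unfolding trace_matching_def by auto
      then obtain i where i: "i < length (T n n)" "T n n ! i = (a,b)" by (auto simp: in_set_conv_nth)
      define j where "j = int i + 1"
      have e1: "2 * j - 1 = 2 * int i + 1" "2 * j = 2 * int i + 2" unfolding j_def by auto
      have o: "m (2 * int i + 1) = int (fst (T n n ! i))" "m (2 * int i + 2) = int (snd (T n n ! i))"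
        using outs i by auto
      have a1: "m (2 * j - 1) = int (fst (T n n ! i))" using o(1) e1(1) by metis
      have a2: "m (2 * j) = int (snd (T n n ! i))" using o(2) e1(2) by metis
      have "nat (m (2 * j - 1)) = a" "nat (m (2 * j)) = b"
        using a1 a2 i(2) by simp_all
      then have "e = {nat (m (2 * j - 1)), nat (m (2 * j))}" using ab(2) by simp
      moreover have "1 \<le> j" "j \<le> m 0" using i m0 unfolding j_def by auto
      ultimately show "e \<in> output_edges m" unfolding output_edges_def by blast
    qed
  qed
qed

end

theorem theorem1:
  shows "\<exists>(P :: instr list) (c :: nat). \<forall>n \<ge> 1. \<forall>\<pi>. \<pi> permutes {1..n} \<longrightarrow>
           (\<exists>k \<le> c * n ^ 2.
              halted P (run P k (0, input_mem n \<pi>)) \<and>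
              maximum_induced_matching (perm_graph_edges n \<pi>)
                (output_edges (snd (run P k (0, input_mem n \<pi>)))))"
proof -
  have "\<exists>k \<le> 200 * n ^ 2. halted prog (run prog k (0, input_mem n \<pi>)) \<and>
      maximum_induced_matching (perm_graph_edges n \<pi>) (output_edges (snd (run prog k (0, input_mem n \<pi>))))"
    if "1 \<le> n" "\<pi> permutes {1..n}" for n \<pi>
  proof -
    interpret perm_graph n \<pi> by unfold_locales fact
    obtain k m where "k \<le> 200 * n ^ 2" "run prog k (0, input_mem n \<pi>) = (92, m)" "output_mem m"
      using prog_terminates[OF \<open>1 \<le> n\<close>] by blast
    then show ?thesis
      using halted_prog_end output_edges_trace maximum_induced_matching_trace by auto
  qed
  then show ?thesis by blast
qed

end
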